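(* Let $\Omega\subset\mathbb R^n$ be open and $t_1<t_2$. For each $(x,t)\in\Omega\times(t_1,t_2)$ let $\mathbb A_{x,t}$ be a nonempty collection of nonempty subsets of $\mathbb S^n_+(\mathbb R)\times(0,\infty)$ such that $\bigcup\mathbb A_{x,t}=\{(A,b):(A,b)\in\mathcal A\text{ for some }\mathcal A\in\mathbb A_{x,t}\}$ is bounded, and define $$F(x,t,z,M)=\sup_{\mathcal A\in\mathbb A_{x,t}}\inf_{(A,b)\in\mathcal A}\big\{\operatorname{trace}(A^tMA)-b\,z\big\},\qquad z\in\mathbb R,\ M\in\mathbb S^n(\mathbb R).$$ A function $u\in C(\Omega\times(t_1,t_2))$ is a viscosity solution of $F(x,t,\partial_tu,D^2u)=0$ in $\Omega\times(t_1,t_2)$ if and only if $$u(x,t)=\sup_{\mathcal A\in\mathbb A_{x,t}}\inf_{(A,b)\in\mathcal A}\frac{1}{\frac{b}{n+2}\varepsilon^2}\int_{t-\frac{b}{n+2}\varepsilon^2}^{t}\frac{1}{|B_\varepsilon(0)|}\int_{B_\varepsilon(0)}u(x+Ay,s)\,dy\,ds+o(\varepsilon^2)\quad\text{as }\varepsilon\to0$$ in the viscosity sense.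
   Context: $\mathbb S^n(\mathbb R)$ is the set of symmetric $n\times n$ real matrices and $\mathbb S^n_+(\mathbb R)$ the positive semidefinite ones. $C^{2,1}$ denotes functions twice continuously differentiable in $x$ and continuously differentiable in $t$. For a constant $c$ and function $g$, "$c\le g(\varepsilon)+o(\varepsilon^2)$" means $\lim_{\varepsilon\to0}[c-g(\varepsilon)]^+/\varepsilon^2=0$ and "$c\ge g(\varepsilon)+o(\varepsilon^2)$" means $\lim_{\varepsilon\to0}[c-g(\varepsilon)]^-/\varepsilon^2=0$. Viscosity solution: $u$ continuous is a viscosity solution of $F(x,t,\partial_tu,D^2u)=0$ if for every $(x,t)\in\Omega\times(t_1,t_2)$ and every $\phi\in C^{2,1}$: (i) if $u-\phi$ has a strict local maximum at $(x,t)$ with $u(x,t)=\phi(x,t)$, then $F(x,t,\partial_t\phi(x,t),D^2\phi(x,t))\ge0$; (ii) if $u-\phi$ has a strict local minimum at $(x,t)$ with $u(x,t)=\phi(x,t)$, then $F(x,t,\partial_t\phi(x,t),D^2\phi(x,t))\le0$. Asymptotic formula in the viscosity sense: writing it as $u(x,t)=M_\varepsilon[u](x,t)+o(\varepsilon^2)$ with $M_\varepsilon[v](x,t)$ the right-hand side sup-inf of averages, it holds in the viscosity sense if for every $(x,t)$ and every $\phi\in C^{2,1}$: (i) if $u-\phi$ has a strict local minimum at $(x,t)$ with $u(x,t)=\phi(x,t)$, then $0\ge-\phi(x,t)+M_\varepsilon[\phi](x,t)+o(\varepsilon^2)$; (ii) if $u-\phi$ has a strict local maximum at $(x,t)$ with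 $u(x,t)=\phi(x,t)$, then $0\le-\phi(x,t)+M_\varepsilon[\phi](x,t)+o(\varepsilon^2)$. *)

theory Defs
  imports "HOL-Analysis.Analysis"
begin

definition psd_matrix :: "real^'n^'n \<Rightarrow> bool" where
  "psd_matrix A \<longleftrightarrow> transpose A = A \<and> (\<forall>v. 0 \<le> v \<bullet> (A *v v))"

definition F_op ::
  "(real^'a::finite \<Rightarrow> real \<Rightarrow> ((real^'a^'a) \<times> real) set set)
    \<Rightarrow> real^'a \<Rightarrow> real \<Rightarrow> real \<Rightarrow> real^'a^'a \<Rightarrow> real" where
  "F_op AA x t z M =
     (SUP \<A>\<in>AA x t. INF p\<in>\<A>. trace (transpose (fst p) ** M ** fst p) - snd p * z)"

definition C21_on ::
  "((real^'n) \<times> real) set \<Rightarrow> (real^'n \<Rightarrow> real \<Rightarrow> real) \<Rightarrow> (real^'n \<Rightarrow> real \<Rightarrow> real)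
    \<Rightarrow> (real^'n \<Rightarrow> real \<Rightarrow> real^'n) \<Rightarrow> (real^'n \<Rightarrow> real \<Rightarrow> real^'n^'n) \<Rightarrow> bool" where
  "C21_on S phi phit Dphi D2phi \<longleftrightarrow>
     (\<forall>(x,t)\<in>S.
        ((\<lambda>s. phi x s) has_real_derivative phit x t) (at t) \<and>
        ((\<lambda>y. phi y t) has_derivative (\<lambda>h. Dphi x t \<bullet> h)) (at x) \<and>
        ((\<lambda>y. Dphi y t) has_derivative (\<lambda>h. D2phi x t *v h)) (at x)) \<and>
     continuous_on S (\<lambda>(x,t). phi x t) \<and>
     continuous_on S (\<lambda>(x,t). phit x t) \<and>
     continuous_on S (\<lambda>(x,t). Dphi x t) \<and>
     continuous_on S (\<lambda>(x,t). D2phi x t)"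

definition strict_loc_max ::
  "((real^'n) \<times> real) set \<Rightarrow> (real^'n \<Rightarrow> real \<Rightarrow> real) \<Rightarrow> real^'n \<Rightarrow> real \<Rightarrow> bool" where
  "strict_loc_max S w x t \<longleftrightarrow>
     (\<exists>r>0. \<forall>y s. (y,s) \<in> S \<and> dist y x < r \<and> \<bar>s - t\<bar> < r \<and> (y,s) \<noteq> (x,t)
                 \<longrightarrow> w y s < w x t)"

definition strict_loc_min ::
  "((real^'n) \<times> real) set \<Rightarrow> (real^'n \<Rightarrow> real \<Rightarrow> real) \<Rightarrow> real^'n \<Rightarrow> real \<Rightarrow> bool" where
  "strict_loc_min S w x t \<longleftrightarrow>
     (\<exists>r>0. \<forall>y s. (y,s) \<in> S \<and> dist y x < r \<and> \<bar>s - t\<bar> < r \<and> (y,s) \<noteq> (x,t)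
                 \<longrightarrow> w y s > w x t)"

definition viscosity_solution ::
  "(real^'n) set \<Rightarrow> real \<Rightarrow> real \<Rightarrow> (real^'n \<Rightarrow> real \<Rightarrow> real \<Rightarrow> real^'n^'n \<Rightarrow> real)
    \<Rightarrow> (real^'n \<Rightarrow> real \<Rightarrow> real) \<Rightarrow> bool" where
  "viscosity_solution \<Omega> t1 t2 F u \<longleftrightarrow>
     continuous_on (\<Omega> \<times> {t1<..<t2}) (\<lambda>(x,t). u x t) \<and>
     (\<forall>x t phi phit Dphi D2phi. x \<in> \<Omega> \<and> t \<in> {t1<..<t2} \<and>
        C21_on (\<Omega> \<times> {t1<..<t2}) phi phit Dphi D2phi \<longrightarrow>
        ((strict_loc_max (\<Omega> \<times> {t1<..<t2}) (\<lambda>y s. u y s - phi y s) x t \<and> u x t = phi x t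
            \<longrightarrow> F x t (phit x t) (D2phi x t) \<ge> 0) \<and>
         (strict_loc_min (\<Omega> \<times> {t1<..<t2}) (\<lambda>y s. u y s - phi y s) x t \<and> u x t = phi x t
            \<longrightarrow> F x t (phit x t) (D2phi x t) \<le> 0)))"

definition mean_op ::
  "(real^'n::finite \<Rightarrow> real \<Rightarrow> ((real^'n^'n) \<times> real) set set)
    \<Rightarrow> real \<Rightarrow> (real^'n \<Rightarrow> real \<Rightarrow> real) \<Rightarrow> real^'n \<Rightarrow> real \<Rightarrow> real" where
  "mean_op AA \<epsilon> v x t =
     (SUP \<A>\<in>AA x t. INF p\<in>\<A>.
        (let A = fst p; b = snd p; \<tau> = b / (real CARD('n) + 2) * \<epsilon>\<^sup>2 in
          (1 / \<tau>) * integral {t - \<tau>..t}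
             (\<lambda>s. (1 / measure lborel (ball (0::real^'n) \<epsilon>)) *
                   integral (ball 0 \<epsilon>) (\<lambda>y. v (x + A *v y) s))))"

text \<open>For c = 0 and g(eps) = -phi(x,t) + M_eps[phi](x,t):
  "0 >= g + o(eps^2)" means [0 - g]^- / eps^2 -> 0, i.e. max 0 (g) / eps^2 -> 0;
  "0 <= g + o(eps^2)" means [0 - g]^+ / eps^2 -> 0, i.e. max 0 (-g) / eps^2 -> 0.\<close>
definition asymp_viscosity ::
  "(real^'n) set \<Rightarrow> real \<Rightarrow> real \<Rightarrow> (real^'n \<Rightarrow> real \<Rightarrow> ((real^'n^'n) \<times> real) set set)
    \<Rightarrow> (real^'n \<Rightarrow> real \<Rightarrow> real) \<Rightarrow> bool" where
  "asymp_viscosity \<Omega> t1 t2 AA u \<longleftrightarrow>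
     (\<forall>x t phi phit Dphi D2phi. x \<in> \<Omega> \<and> t \<in> {t1<..<t2} \<and>
        C21_on (\<Omega> \<times> {t1<..<t2}) phi phit Dphi D2phi \<longrightarrow>
        ((strict_loc_min (\<Omega> \<times> {t1<..<t2}) (\<lambda>y s. u y s - phi y s) x t \<and> u x t = phi x t
            \<longrightarrow> ((\<lambda>\<epsilon>. max 0 (- phi x t + mean_op AA \<epsilon> phi x t) / \<epsilon>\<^sup>2) \<longlongrightarrow> 0) (at_right 0)) \<and>
         (strict_loc_max (\<Omega> \<times> {t1<..<t2}) (\<lambda>y s. u y s - phi y s) x t \<and> u x t = phi x t
            \<longrightarrow> ((\<lambda>\<epsilon>. max 0 (- (- phi x t + mean_op AA \<epsilon> phi x t)) / \<epsilon>\<^sup>2) \<longlongrightarrow> 0) (at_right 0))))"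

end

theory Submission
  imports Defs
begin

text \<open>Let \<open>\<phi>\<close> be a test function, twice continuously differentiable in space and once in time.
  By reflection and permutation symmetry of the ball, and by scaling, the average of \<open>y\<^sub>i\<close>
  over \<open>B\<^sub>\<epsilon>\<close> vanishes and the average of \<open>y\<^sub>i y\<^sub>j\<close> is \<open>\<delta>\<^sub>i\<^sub>j \<epsilon>\<^sup>2 / (n + 2)\<close>. A second-order
  Taylor expansion in space and a first-order one in time then show that the average of
  \<open>\<phi>(x + A y, s)\<close> over \<open>B\<^sub>\<epsilon> \<times> [t - b \<epsilon>\<^sup>2 / (n + 2), t]\<close> is
  \<open>\<phi>(x, t) + \<epsilon>\<^sup>2 / (2 (n + 2)) (trace (A\<^sup>T D\<^sup>2\<phi> A) - b \<partial>\<^sub>t\<phi>) + o(\<epsilon>\<^sup>2)\<close>, uniformly over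
  the bounded set of pairs \<open>(A, b)\<close>. A sup-inf preserves uniform approximation by an affine
  image, so \<open>(M\<^sub>\<epsilon>[\<phi>](x, t) - \<phi>(x, t)) / \<epsilon>\<^sup>2\<close> tends to \<open>F(x, t, \<partial>\<^sub>t\<phi>, D\<^sup>2\<phi>) / (2 (n + 2))\<close>,
  and each one-sided \<open>o(\<epsilon>\<^sup>2)\<close> condition becomes the corresponding sign condition on \<open>F\<close>.\<close>

section \<open>Integrals over balls\<close>

lemma absolutely_integrable_on_ball_if_continuous:
  fixes f :: "'a::euclidean_space \<Rightarrow> real"
  assumes "continuous_on (cball c e) f"
  shows "f absolutely_integrable_on ball c e"
proof -
  have "integrable lborel (\<lambda>x. indicator (cball c e) x *\<^sub>R f x)"
    by (rule borel_integrable_compact) (use assms in auto)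
  hence "set_integrable lebesgue (cball c e) f"
    unfolding set_integrable_def
    by (subst integrable_completion) (auto intro: borel_measurable_integrable)
  then show ?thesis
    by (rule set_integrable_subset) auto
qed

lemma integrable_on_ball_if_continuous:
  fixes f :: "'a::euclidean_space \<Rightarrow> real"
  assumes "continuous_on (cball c e) f"
  shows "f integrable_on ball c e"
  using absolutely_integrable_on_ball_if_continuous[OF assms] set_lebesgue_integral_eq_integral(1)
  by blast

lemma integrable_on_ball_if_continuous_everywhere:
  fixes f :: "'a::euclidean_space \<Rightarrow> real"
  assumes "continuous_on UNIV f"
  shows "f integrable_on ball c e"
  using assms by (intro integrable_on_ball_if_continuous) (auto intro: continuous_on_subset)

lemma has_integral_one_ball:
  "((\<lambda>x. 1::real) has_integral measure lborel (ball c e)) (ball (c::'a::euclidean_space) e)"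
  using emeasure_bounded_finite[of "ball c e"] by (intro has_integral_measure_lborel) auto

lemma integral_approximation_bound:
  fixes f p :: "'a::euclidean_space \<Rightarrow> real"
  assumes f: "f integrable_on S" and p: "(p has_integral I) S"
    and one: "((\<lambda>x. 1) has_integral m) S"
    and close: "\<And>x. x \<in> S \<Longrightarrow> \<bar>f x - p x\<bar> \<le> \<eta>"
  shows "\<bar>integral S f - I\<bar> \<le> \<eta> * m"
proof -
  have "\<bar>integral S f - I\<bar> = norm (integral S (\<lambda>x. f x - p x))"
    using integral_diff[OF f has_integral_integrable[OF p]] integral_unique[OF p] by simp
  also have "\<dots> \<le> integral S (\<lambda>x. \<eta>)"
    using close has_integral_mult_left[OF one, of \<eta>]
    by (intro integral_norm_bound_integral integrable_diff f has_integral_integrable[OF p])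
       (auto simp: has_integral_integrable)
  also have "\<dots> = \<eta> * m"
    using has_integral_mult_left[OF one, of \<eta>] by (simp add: integral_unique)
  finally show ?thesis .
qed

lemma ball_subset_cube: "ball (0::real^'n) e \<subseteq> cbox (- (\<chi> i. e)) (\<chi> i. e)"
proof
  fix y :: "real^'n" assume "y \<in> ball 0 e"
  hence "\<bar>y $ i\<bar> \<le> e" for i
    using component_le_norm_cart[of y i] by simp
  hence "- e \<le> y $ i \<and> y $ i \<le> e" for i
    by (metis abs_le_iff minus_le_iff)
  thus "y \<in> cbox (- (\<chi> i. e)) (\<chi> i. e)"
    by (simp add: mem_box_cart)
qed

lemma has_integral_ball_compose_symmetry:
  fixes f :: "real^'n \<Rightarrow> real" and g :: "real^'n \<Rightarrow> real^'n"
  assumes invol: "\<And>x. g (g x) = x" and "linear g"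
    and box: "\<And>u v. \<exists>w z. g ` cbox u v = cbox w z"
    and content: "\<And>u v. measure lborel (g ` cbox u v) = measure lborel (cbox u v)"
    and norm: "\<And>x. norm (g x) = norm x"
    and cube: "g ` cbox (- (\<chi> i. e)) (\<chi> i. e) = cbox (- (\<chi> i. e)) (\<chi> i. e)"
    and f: "(f has_integral I) (ball 0 e)"
  shows "((\<lambda>x. f (g x)) has_integral I) (ball 0 e)"
proof -
  let ?Q = "cbox (- (\<chi> i. e)) (\<chi> i. e) :: (real^'n) set"
  let ?F = "\<lambda>x. if x \<in> ball 0 e then f x else 0"
  have F: "(?F has_integral I) ?Q"
    using f ball_subset_cube by (subst has_integral_restrict) auto
  have "continuous (at x) g" for x
    using \<open>linear g\<close> linear_continuous_at linear_linear by blast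
  from has_integral_twiddle[where r=1, OF _ invol invol this box box _ F]
  have "((\<lambda>x. ?F (g x)) has_integral I) ?Q"
    using cube content by simp
  moreover have "(\<lambda>x. ?F (g x)) = (\<lambda>x. if x \<in> ball 0 e then f (g x) else 0)"
    using norm by auto
  ultimately have "((\<lambda>x. if x \<in> ball 0 e then f (g x) else 0) has_integral I) ?Q"
    by simp
  thus ?thesis
    by (rule has_integral_restrict[OF ball_subset_cube, THEN iffD1])
qed

definition reflect_coord :: "'n \<Rightarrow> real^'n \<Rightarrow> real^'n" where
  "reflect_coord i x = (\<chi> k. if k = i then - x $ k else x $ k)"

lemma reflect_coord_reflect_coord [simp]: "reflect_coord i (reflect_coord i x) = x"
  by (simp add: reflect_coord_def vec_eq_iff)

lemma linear_reflect_coord: "linear (reflect_coord i)"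
  by (auto simp: reflect_coord_def linear_iff vec_eq_iff)

lemma norm_reflect_coord [simp]: "norm (reflect_coord i x) = norm x"
  unfolding norm_vec_def L2_set_def reflect_coord_def by (simp, intro sum.cong) auto

lemma reflect_coord_image_cbox:
  "reflect_coord i ` cbox u v =
     cbox (\<chi> k. if k = i then - v $ k else u $ k) (\<chi> k. if k = i then - u $ k else v $ k)"
proof -
  have "x \<in> reflect_coord i ` cbox u v \<longleftrightarrow> reflect_coord i x \<in> cbox u v" for x
    by (metis image_iff reflect_coord_reflect_coord)
  moreover have "\<forall>k. (u$k \<le> (reflect_coord i x)$k \<and> (reflect_coord i x)$k \<le> v$k) \<longleftrightarrow>
     ((\<chi> k. if k = i then - v $ k else u $ k)$k \<le> x$k \<and> x$k \<le> (\<chi> k. if k = i then - u $ k else v $ k)$k)" for x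
    by (auto simp: reflect_coord_def)
  ultimately show ?thesis unfolding mem_box_cart set_eq_iff by blast
qed

lemma content_reflect_coord_image_cbox:
  "measure lborel (reflect_coord i ` cbox u v) = measure lborel (cbox u v)"
proof (cases "cbox u v = {}")
  case False
  hence "reflect_coord i ` cbox u v \<noteq> {}" by simp
  with False show ?thesis
    unfolding reflect_coord_image_cbox
    by (simp add: content_cbox_cart) (intro prod.cong, auto)
qed simp

lemma has_integral_ball_reflect_coord:
  fixes f :: "real^'n \<Rightarrow> real"
  assumes "(f has_integral I) (ball 0 e)"
  shows "((\<lambda>x. f (reflect_coord i x)) has_integral I) (ball 0 e)"
proof (rule has_integral_ball_compose_symmetry[OF _ linear_reflect_coord _
      content_reflect_coord_image_cbox _ _ assms])
  show "\<exists>w z. reflect_coord i ` cbox u v = cbox w z" for u v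
    using reflect_coord_image_cbox by blast
  show "reflect_coord i ` cbox (- (\<chi> i. e)) (\<chi> i. e) = cbox (- (\<chi> i. e)) (\<chi> i. e)"
    unfolding reflect_coord_image_cbox by (intro arg_cong2[where f=cbox]) (auto simp: vec_eq_iff)
qed simp_all

definition swap_index :: "'n \<Rightarrow> 'n \<Rightarrow> 'n \<Rightarrow> 'n" where
  "swap_index i j k = (if k = i then j else if k = j then i else k)"

lemma swap_index_swap_index [simp]: "swap_index i j (swap_index i j k) = k"
  by (simp add: swap_index_def)

definition swap_coords :: "'n \<Rightarrow> 'n \<Rightarrow> real^'n \<Rightarrow> real^'n" where
  "swap_coords i j x = (\<chi> k. x $ swap_index i j k)"

lemma swap_coords_swap_coords [simp]: "swap_coords i j (swap_coords i j x) = x"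
  by (simp add: swap_coords_def vec_eq_iff)

lemma linear_swap_coords: "linear (swap_coords i j)"
  by (auto simp: swap_coords_def linear_iff vec_eq_iff)

lemma sum_swap_index: "(\<Sum>k\<in>UNIV. f (swap_index i j k)) = (\<Sum>k\<in>UNIV. f k)"
  by (rule sum.reindex_bij_witness[of _ "swap_index i j" "swap_index i j"]) auto

lemma prod_swap_index: "(\<Prod>k\<in>UNIV. f (swap_index i j k)) = (\<Prod>k\<in>UNIV. f k)"
  by (rule prod.reindex_bij_witness[of _ "swap_index i j" "swap_index i j"]) auto

lemma norm_swap_coords [simp]: "norm (swap_coords i j x) = norm x"
  unfolding norm_vec_def L2_set_def swap_coords_def
  using sum_swap_index[of "\<lambda>k. (norm (x $ k))\<^sup>2" i j] by simp

lemma swap_coords_image_cbox: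
  "swap_coords i j ` cbox u v = cbox (swap_coords i j u) (swap_coords i j v)"
proof -
  have "x \<in> swap_coords i j ` cbox u v \<longleftrightarrow> swap_coords i j x \<in> cbox u v" for x
    by (metis (no_types, lifting) image_iff swap_coords_swap_coords)
  moreover have "swap_coords i j x \<in> cbox u v \<longleftrightarrow>
      x \<in> cbox (swap_coords i j u) (swap_coords i j v)" for x
  proof
    assume "swap_coords i j x \<in> cbox u v"
    hence "u $ swap_index i j k \<le> swap_coords i j x $ swap_index i j k \<and>
        swap_coords i j x $ swap_index i j k \<le> v $ swap_index i j k" for k
      unfolding mem_box_cart by blast
    thus "x \<in> cbox (swap_coords i j u) (swap_coords i j v)"
      unfolding mem_box_cart by (simp add: swap_coords_def)
  next
    assume "x \<in> cbox (swap_coords i j u) (swap_coords i j v)"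
    hence "swap_coords i j u $ swap_index i j k \<le> x $ swap_index i j k \<and>
        x $ swap_index i j k \<le> swap_coords i j v $ swap_index i j k" for k
      unfolding mem_box_cart by blast
    thus "swap_coords i j x \<in> cbox u v"
      unfolding mem_box_cart by (simp add: swap_coords_def)
  qed
  ultimately show ?thesis by blast
qed

lemma content_swap_coords_image_cbox:
  "measure lborel (swap_coords i j ` cbox u v) = measure lborel (cbox u v)"
proof (cases "cbox u v = {}")
  case False
  hence "swap_coords i j ` cbox u v \<noteq> {}" by simp
  with False show ?thesis
    unfolding swap_coords_image_cbox
    using prod_swap_index[of "\<lambda>k. v $ k - u $ k" i j]
    by (simp add: content_cbox_cart swap_coords_def)
qed simp

lemma has_integral_ball_swap_coords:
  fixes f :: "real^'n \<Rightarrow> real"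
  assumes "(f has_integral I) (ball 0 e)"
  shows "((\<lambda>x. f (swap_coords i j x)) has_integral I) (ball 0 e)"
proof (rule has_integral_ball_compose_symmetry[OF _ linear_swap_coords _
      content_swap_coords_image_cbox _ _ assms])
  show "\<exists>w z. swap_coords i j ` cbox u v = cbox w z" for u v
    using swap_coords_image_cbox by blast
  show "swap_coords i j ` cbox (- (\<chi> i. e)) (\<chi> i. e) = cbox (- (\<chi> i. e)) (\<chi> i. e)"
    unfolding swap_coords_image_cbox
    by (intro arg_cong2[where f=cbox]) (auto simp: vec_eq_iff swap_coords_def)
qed simp_all

lemma has_integral_ball_zero_if_odd:
  fixes f :: "real^'n \<Rightarrow> real"
  assumes "continuous_on UNIV f" and odd: "\<And>y. f (reflect_coord i y) = - f y"
  shows "(f has_integral 0) (ball 0 e)"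
proof -
  define I where "I = integral (ball (0::real^'n) e) f"
  have f: "(f has_integral I) (ball 0 e)"
    unfolding I_def using assms(1) by (intro integrable_integral integrable_on_ball_if_continuous_everywhere)
  hence "((\<lambda>y. - f y) has_integral I) (ball 0 e)"
    using has_integral_ball_reflect_coord[OF f, of i] by (simp add: odd)
  hence "I = - I"
    using has_integral_unique has_integral_neg[OF f] by blast
  with f show ?thesis
    by simp
qed

lemma has_integral_ball_coord: "((\<lambda>y::real^'n. y $ i) has_integral 0) (ball 0 e)"
  by (rule has_integral_ball_zero_if_odd[where i = i]) (auto intro!: continuous_intros simp: reflect_coord_def)

lemma has_integral_ball_coord_mult_coord:
  assumes "i \<noteq> j"
  shows "((\<lambda>y::real^'n. y $ i * y $ j) has_integral 0) (ball 0 e)"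
  using assms
  by (intro has_integral_ball_zero_if_odd[where i = i]) (auto intro!: continuous_intros simp: reflect_coord_def)

lemma integral_ball_coord_square_eq:
  "integral (ball 0 e) (\<lambda>y::real^'n. (y $ i)\<^sup>2) = integral (ball 0 e) (\<lambda>y::real^'n. (y $ j)\<^sup>2)"
proof -
  have "((\<lambda>y::real^'n. (y $ i)\<^sup>2) has_integral integral (ball 0 e) (\<lambda>y. (y $ i)\<^sup>2)) (ball 0 e)"
    by (intro integrable_integral integrable_on_ball_if_continuous_everywhere continuous_intros)
  from has_integral_ball_swap_coords[OF this, where i = i and j = j]
  show ?thesis
    by (simp add: swap_coords_def swap_index_def integral_unique)
qed

lemma has_integral_ball_rescale:
  fixes f :: "real^'n \<Rightarrow> real"
  assumes "r > 0" and f: "(f has_integral I) (ball 0 1)"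
  shows "((\<lambda>x. f ((1 / r) *\<^sub>R x)) has_integral r ^ CARD('n) * I) (ball 0 r)"
proof -
  let ?Q = "\<lambda>a::real. cbox (- (\<chi> i. a)) (\<chi> i. a) :: (real^'n) set"
  let ?F = "\<lambda>y. if y \<in> ball 0 1 then f y else 0"
  have "(?F has_integral I) (?Q 1)"
    using f ball_subset_cube by (subst has_integral_restrict) auto
  from has_integral_affinity[OF this, of "1 / r" "0::real^'n"]
  have "((\<lambda>x. ?F ((1 / r) *\<^sub>R x)) has_integral r ^ CARD('n) * I) ((\<lambda>x. r *\<^sub>R x) ` ?Q 1)"
    using \<open>r > 0\<close> by (simp add: power_one_over cong: if_cong)
  moreover have "(\<lambda>x. r *\<^sub>R x) ` ?Q 1 = ?Q r"
  proof -
    have "0 \<in> ?Q 1"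
      by (simp add: mem_box_cart)
    hence "?Q 1 \<noteq> {}"
      by blast
    hence "(\<lambda>x. r *\<^sub>R x) ` ?Q 1 = cbox (r *\<^sub>R - (\<chi> i. 1)) (r *\<^sub>R (\<chi> i. 1))"
      using \<open>r > 0\<close> by (subst image_smult_cbox) auto
    also have "\<dots> = ?Q r"
      by (intro arg_cong2[where f = cbox]) (auto simp: vec_eq_iff)
    finally show ?thesis .
  qed
  moreover have "(1 / r) *\<^sub>R x \<in> ball 0 1 \<longleftrightarrow> x \<in> ball 0 r" for x :: "real^'n"
    using \<open>r > 0\<close> by (simp add: field_simps)
  ultimately have "((\<lambda>x. if x \<in> ball 0 r then f ((1 / r) *\<^sub>R x) else 0) has_integral r ^ CARD('n) * I) (?Q r)"
    by (simp cong: if_cong)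
  thus ?thesis
    by (rule has_integral_restrict[OF ball_subset_cube, THEN iffD1])
qed

lemma integral_ball_norm_square_scale:
  assumes "r > 0"
  shows "integral (ball (0::real^'n) r) (\<lambda>y. (norm y)\<^sup>2) =
           r ^ (CARD('n) + 2) * integral (ball (0::real^'n) 1) (\<lambda>y. (norm y)\<^sup>2)"
proof -
  have "((\<lambda>y::real^'n. (norm y)\<^sup>2) has_integral
      integral (ball 0 1) (\<lambda>y::real^'n. (norm y)\<^sup>2)) (ball 0 1)"
    by (intro integrable_integral integrable_on_ball_if_continuous_everywhere continuous_intros)
  from has_integral_mult_right[OF has_integral_ball_rescale[OF \<open>r > 0\<close> this], of "r\<^sup>2"]
  have "((\<lambda>y::real^'n. (norm y)\<^sup>2) has_integral
      r\<^sup>2 * (r ^ CARD('n) * integral (ball 0 1) (\<lambda>y::real^'n. (norm y)\<^sup>2))) (ball 0 r)"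
    using \<open>r > 0\<close> by (simp add: power_divide)
  thus ?thesis
    by (simp add: integral_unique power_add power2_eq_square mult_ac)
qed

lemma integral_ball_norm_square_shell_bounds:
  assumes "R \<ge> 1"
  defines "I \<equiv> \<lambda>r. integral (ball (0::real^'n) r) (\<lambda>y. (norm y)\<^sup>2)"
    and "V \<equiv> \<lambda>r. measure lborel (ball (0::real^'n) r)"
  shows "V R - V 1 \<le> I R - I 1" and "I R - I 1 \<le> R\<^sup>2 * (V R - V 1)"
proof -
  have I: "((\<lambda>y::real^'n. (norm y)\<^sup>2) has_integral I r) (ball 0 r)" for r
    unfolding I_def by (intro integrable_integral integrable_on_ball_if_continuous_everywhere continuous_intros)
  have V: "((\<lambda>y::real^'n. 1) has_integral V r) (ball 0 r)" for r
    unfolding V_def by (rule has_integral_one_ball)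
  have "((\<lambda>y::real^'n. (if y \<in> ball 0 1 then (norm y)\<^sup>2 - c else 0) + c)
      has_integral I 1 - c * V 1 + c * V R) (ball 0 R)" for c
  proof -
    have "((\<lambda>y::real^'n. (norm y)\<^sup>2 - c) has_integral I 1 - c * V 1) (ball 0 1)"
      using has_integral_diff[OF I has_integral_mult_right[OF V, of c]] by simp
    hence "((\<lambda>y::real^'n. if y \<in> ball 0 1 then (norm y)\<^sup>2 - c else 0) has_integral I 1 - c * V 1) (ball 0 R)"
      using \<open>R \<ge> 1\<close> by (intro has_integral_restrict[THEN iffD2]) auto
    from has_integral_add[OF this has_integral_mult_right[OF V, of c]]
    show ?thesis
      by simp
  qed
  note shell = this
  have "I 1 - 1 * V 1 + 1 * V R \<le> I R"
  proof (rule has_integral_le[OF shell I])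
    fix y :: "real^'n"
    show "(if y \<in> ball 0 1 then (norm y)\<^sup>2 - 1 else 0) + 1 \<le> (norm y)\<^sup>2"
      by (auto simp: one_le_power)
  qed
  thus "V R - V 1 \<le> I R - I 1"
    by simp
  have "I R \<le> I 1 - R\<^sup>2 * V 1 + R\<^sup>2 * V R"
  proof (rule has_integral_le[OF I shell])
    fix y :: "real^'n" assume "y \<in> ball 0 R"
    thus "(norm y)\<^sup>2 \<le> (if y \<in> ball 0 1 then (norm y)\<^sup>2 - R\<^sup>2 else 0) + R\<^sup>2"
      by (auto intro!: power_mono)
  qed
  thus "I R - I 1 \<le> R\<^sup>2 * (V R - V 1)"
    by (simp add: algebra_simps)
qed

lemma tendsto_power_difference_quotient:
  "((\<lambda>h. ((1 + h) ^ k - 1) / h) \<longlongrightarrow> real k) (at_right (0::real))"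
proof -
  have "DERIV (\<lambda>x::real. x ^ k) 1 :> real k"
    by (auto intro!: derivative_eq_intros)
  hence "((\<lambda>h. ((1 + h) ^ k - 1) / h) \<longlongrightarrow> real k) (at (0::real))"
    unfolding DERIV_def by simp
  thus ?thesis
    by (simp add: filterlim_at_split)
qed

text \<open>By scaling, a ball of radius \<open>1 + h\<close> has volume \<open>(1 + h)^n V\<close> and second moment
  \<open>(1 + h)^(n+2) I\<close>; the shell bounds, divided by \<open>h\<close>, become \<open>n V \<le> (n + 2) I \<le> n V\<close>
  as \<open>h \<rightarrow> 0\<close>.\<close>
lemma integral_unit_ball_norm_square:
  "integral (ball (0::real^'n) 1) (\<lambda>y. (norm y)\<^sup>2) =
     real CARD('n) / (real CARD('n) + 2) * measure lborel (ball (0::real^'n) 1)"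
proof -
  define n where "n = CARD('n)"
  define I where "I = integral (ball (0::real^'n) 1) (\<lambda>y. (norm y)\<^sup>2)"
  define V where "V = measure lborel (ball (0::real^'n) 1)"
  have bounds: "((1 + h) ^ n - 1) / h * V \<le> ((1 + h) ^ (n + 2) - 1) / h * I"
    "((1 + h) ^ (n + 2) - 1) / h * I \<le> (1 + h)\<^sup>2 * (((1 + h) ^ n - 1) / h * V)"
    if "h > 0" for h :: real
  proof -
    have "integral (ball (0::real^'n) (1 + h)) (\<lambda>y. (norm y)\<^sup>2) = (1 + h) ^ (n + 2) * I"
      unfolding I_def n_def using that by (intro integral_ball_norm_square_scale) simp
    moreover have "measure lborel (ball (0::real^'n) (1 + h)) = (1 + h) ^ n * V"
      unfolding V_def n_def using content_ball_conv_unit_ball[of "1 + h" "0::real^'n"] that by simp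
    ultimately have le: "((1 + h) ^ n - 1) * V \<le> ((1 + h) ^ (n + 2) - 1) * I"
      "((1 + h) ^ (n + 2) - 1) * I \<le> (1 + h)\<^sup>2 * (((1 + h) ^ n - 1) * V)"
      using integral_ball_norm_square_shell_bounds[of "1 + h", where 'n = 'n] that
      unfolding I_def V_def by (simp_all add: algebra_simps)
    show "((1 + h) ^ n - 1) / h * V \<le> ((1 + h) ^ (n + 2) - 1) / h * I"
      "((1 + h) ^ (n + 2) - 1) / h * I \<le> (1 + h)\<^sup>2 * (((1 + h) ^ n - 1) / h * V)"
      using divide_right_mono[OF le(1) less_imp_le[OF that]] divide_right_mono[OF le(2) less_imp_le[OF that]]
      by (simp_all only: times_divide_eq_left times_divide_eq_right)
  qed
  have lim_I: "((\<lambda>h. ((1 + h) ^ (n + 2) - 1) / h * I) \<longlongrightarrow> real (n + 2) * I) (at_right 0)"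
    by (intro tendsto_mult tendsto_power_difference_quotient tendsto_const)
  have lim_V: "((\<lambda>h. ((1 + h) ^ n - 1) / h * V) \<longlongrightarrow> real n * V) (at_right 0)"
    by (intro tendsto_mult tendsto_power_difference_quotient tendsto_const)
  have "((\<lambda>h::real. (1 + h)\<^sup>2) \<longlongrightarrow> (1 + 0)\<^sup>2) (at_right 0)"
    by (intro tendsto_intros)
  from tendsto_mult[OF this lim_V]
  have lim_V': "((\<lambda>h. (1 + h)\<^sup>2 * (((1 + h) ^ n - 1) / h * V)) \<longlongrightarrow> real n * V) (at_right 0)"
    by simp
  have "real n * V \<le> real (n + 2) * I"
    using eventually_at_right_less[of 0] bounds(1)
    by (intro tendsto_le[OF trivial_limit_at_right_real lim_I lim_V]) (auto elim: eventually_mono)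
  moreover have "real (n + 2) * I \<le> real n * V"
    using eventually_at_right_less[of 0] bounds(2)
    by (intro tendsto_le[OF trivial_limit_at_right_real lim_V' lim_I]) (auto elim: eventually_mono)
  ultimately show ?thesis
    unfolding I_def[symmetric] V_def[symmetric] n_def[symmetric] by (simp add: field_simps)
qed

lemma integral_ball_norm_square:
  assumes e: "e > 0"
  shows "integral (ball (0::real^'n) e) (\<lambda>y. (norm y)\<^sup>2) =
     real CARD('n) / (real CARD('n) + 2) * e\<^sup>2 * measure lborel (ball (0::real^'n) e)"
proof -
  have "integral (ball (0::real^'n) e) (\<lambda>y. (norm y)\<^sup>2) =
      e ^ (CARD('n) + 2) * integral (ball (0::real^'n) 1) (\<lambda>y. (norm y)\<^sup>2)"
    by (rule integral_ball_norm_square_scale[OF e])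
  also have "\<dots> = e ^ (CARD('n) + 2) * (real CARD('n) / (real CARD('n) + 2) * measure lborel (ball (0::real^'n) 1))"
    by (simp add: integral_unit_ball_norm_square)
  also have "measure lborel (ball (0::real^'n) e) = e ^ CARD('n) * measure lborel (ball (0::real^'n) 1)"
    using content_ball_conv_unit_ball[of e "0::real^'n"] e by simp
  ultimately show ?thesis by (simp add: power_add power2_eq_square)
qed

lemma has_integral_ball_coord_square:
  assumes e: "e > 0"
  shows "((\<lambda>y::real^'n. (y $ i)\<^sup>2) has_integral
           e\<^sup>2 / (real CARD('n) + 2) * measure lborel (ball (0::real^'n) e)) (ball 0 e)"
proof -
  define c where "c = integral (ball (0::real^'n) e) (\<lambda>y. (y $ i)\<^sup>2)"
  have intk: "(\<lambda>y::real^'n. (y $ k)\<^sup>2) integrable_on ball 0 e" for k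
    by (intro integrable_on_ball_if_continuous_everywhere) (auto intro!: continuous_intros)
  have "integral (ball (0::real^'n) e) (\<lambda>y. (norm y)\<^sup>2) =
      integral (ball (0::real^'n) e) (\<lambda>y. \<Sum>k\<in>UNIV. (y $ k)\<^sup>2)"
    unfolding power2_norm_eq_inner inner_vec_def by (simp add: power2_eq_square)
  also have "\<dots> = (\<Sum>k\<in>UNIV. integral (ball (0::real^'n) e) (\<lambda>y. (y $ k)\<^sup>2))"
    by (rule integral_sum) (auto intro: intk)
  also have "\<dots> = (\<Sum>k\<in>(UNIV::'n set). c)"
    unfolding c_def by (intro sum.cong refl integral_ball_coord_square_eq)
  also have "\<dots> = real CARD('n) * c"
    by simp
  finally have "real CARD('n) * c = real CARD('n) / (real CARD('n) + 2) * e\<^sup>2 * measure lborel (ball (0::real^'n) e)"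
    using integral_ball_norm_square[where 'n = 'n, OF e] by simp
  also have "\<dots> = real CARD('n) * (e\<^sup>2 / (real CARD('n) + 2) * measure lborel (ball (0::real^'n) e))"
    by simp
  finally have "c = e\<^sup>2 / (real CARD('n) + 2) * measure lborel (ball (0::real^'n) e)"
    by (subst (asm) mult_left_cancel) auto
  moreover have "((\<lambda>y::real^'n. (y $ i)\<^sup>2) has_integral c) (ball 0 e)"
    unfolding c_def using intk by (rule integrable_integral)
  ultimately show ?thesis by simp
qed

lemma has_integral_ball_quadratic_form:
  fixes P :: "real^'n^'n"
  assumes e: "e > 0"
  shows "((\<lambda>y::real^'n. y \<bullet> (P *v y)) has_integral
            e\<^sup>2 / (real CARD('n) + 2) * measure lborel (ball (0::real^'n) e) * trace P) (ball 0 e)"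
proof -
  define c where "c = e\<^sup>2 / (real CARD('n) + 2) * measure lborel (ball (0::real^'n) e)"
  have eq: "y \<bullet> (P *v y) = (\<Sum>i\<in>UNIV. \<Sum>j\<in>UNIV. P $ i $ j * (y $ i * y $ j))" for y :: "real^'n"
    by (simp add: inner_vec_def matrix_vector_mult_def sum_distrib_left algebra_simps)
  have trm: "((\<lambda>y::real^'n. P $ i $ j * (y $ i * y $ j)) has_integral (if i = j then P $ i $ j * c else 0)) (ball 0 e)" for i j
  proof (cases "i = j")
    case True
    from has_integral_mult_right[OF has_integral_ball_coord_square[OF e, of i], of "P $ i $ j"] True show ?thesis
      unfolding c_def by (simp add: power2_eq_square)
  next
    case False
    from has_integral_mult_right[OF has_integral_ball_coord_mult_coord[OF False, of e], of "P $ i $ j"] False show ?thesis by simp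
  qed
  have "((\<lambda>y::real^'n. \<Sum>i\<in>UNIV. \<Sum>j\<in>UNIV. P $ i $ j * (y $ i * y $ j)) has_integral
          (\<Sum>i\<in>UNIV. \<Sum>j\<in>UNIV. (if i = j then P $ i $ j * c else 0))) (ball 0 e)"
    by (intro has_integral_sum trm) simp_all
  moreover have "(\<Sum>i\<in>UNIV. \<Sum>j\<in>UNIV. (if i = j then P $ i $ j * c else 0)) = c * trace P"
    by (simp add: trace_def sum_distrib_left mult.commute)
  ultimately show ?thesis unfolding eq c_def by simp
qed

lemma has_integral_ball_linear_form:
  fixes w :: "real^'n"
  shows "((\<lambda>y::real^'n. w \<bullet> y) has_integral 0) (ball 0 e)"
proof -
  have "((\<lambda>y::real^'n. \<Sum>i\<in>UNIV. w $ i * y $ i) has_integral (\<Sum>i\<in>(UNIV::'n set). 0)) (ball 0 e)"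
  proof (intro has_integral_sum, simp)
    fix i :: 'n
    show "((\<lambda>y::real^'n. w $ i * y $ i) has_integral 0) (ball 0 e)"
      using has_integral_mult_right[OF has_integral_ball_coord[of i e], of "w$i"] by simp
  qed
  thus ?thesis by (simp add: inner_vec_def)
qed

lemma continuous_on_integral_ball_parametric:
  fixes \<psi> :: "'a::euclidean_space \<Rightarrow> real \<Rightarrow> real"
  assumes cont: "continuous_on (cball 0 e \<times> {a..b}) (\<lambda>(y, s). \<psi> y s)"
  shows "continuous_on {a..b} (\<lambda>s. integral (ball 0 e) (\<lambda>y. \<psi> y s))"
  unfolding continuous_on_iff
proof (intro ballI allI impI)
  fix s0 and \<eta> :: real assume s0: "s0 \<in> {a..b}" and \<eta>: "\<eta> > 0"
  have uc: "uniformly_continuous_on (cball 0 e \<times> {a..b}) (\<lambda>(y, s). \<psi> y s)"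
    by (intro compact_uniformly_continuous cont compact_Times) auto
  have int: "(\<lambda>y. \<psi> y s) integrable_on ball 0 e" if "s \<in> {a..b}" for s
  proof (rule integrable_on_ball_if_continuous)
    have "continuous_on (cball 0 e) (\<lambda>y. (\<lambda>(y, s). \<psi> y s) (y, s))"
      by (rule continuous_on_compose2[OF cont]) (use that in \<open>auto intro!: continuous_intros\<close>)
    thus "continuous_on (cball 0 e) (\<lambda>y. \<psi> y s)" by simp
  qed
  define V where "V = measure lborel (ball (0::'a) e)"
  define \<eta>' where "\<eta>' = \<eta> / (V + 1)"
  have "V \<ge> 0"
    unfolding V_def by simp
  hence "\<eta>' > 0"
    unfolding \<eta>'_def using \<eta> by simp
  from uc[unfolded uniformly_continuous_on_def, rule_format, OF \<open>\<eta>' > 0\<close>]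
  obtain d where "d > 0"
    and d: "\<And>p p'. p \<in> cball 0 e \<times> {a..b} \<Longrightarrow> p' \<in> cball 0 e \<times> {a..b} \<Longrightarrow> dist p' p < d \<Longrightarrow>
       dist ((\<lambda>(y, s). \<psi> y s) p') ((\<lambda>(y, s). \<psi> y s) p) < \<eta>'"
    by metis
  show "\<exists>d>0. \<forall>s\<in>{a..b}. dist s s0 < d \<longrightarrow>
          dist (integral (ball 0 e) (\<lambda>y. \<psi> y s)) (integral (ball 0 e) (\<lambda>y. \<psi> y s0)) < \<eta>"
  proof (intro exI[of _ d] conjI ballI impI \<open>d > 0\<close>)
    fix s assume s: "s \<in> {a..b}" and "dist s s0 < d"
    hence close: "\<bar>\<psi> y s - \<psi> y s0\<bar> \<le> \<eta>'" if "y \<in> ball 0 e" for y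
      using d[of "(y, s0)" "(y, s)"] that s0 by (auto simp: dist_Pair_Pair dist_real_def)
    have "\<bar>integral (ball 0 e) (\<lambda>y. \<psi> y s) - integral (ball 0 e) (\<lambda>y. \<psi> y s0)\<bar> \<le> \<eta>' * V"
      unfolding V_def
      by (rule integral_approximation_bound[OF int[OF s] integrable_integral[OF int[OF s0]]
            has_integral_one_ball close])
    also have "\<dots> < \<eta>"
      unfolding \<eta>'_def using \<eta> \<open>V \<ge> 0\<close> by (simp add: field_simps)
    finally show "dist (integral (ball 0 e) (\<lambda>y. \<psi> y s)) (integral (ball 0 e) (\<lambda>y. \<psi> y s0)) < \<eta>"
      by (simp add: dist_real_def)
  qed
qed

section \<open>Second-order Taylor expansion\<close>

lemma norm_matrix_vector_mult_le:
  fixes A :: "real^'n^'m"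
  shows "norm (A *v x) \<le> norm A * norm x"
proof -
  have "\<bar>(A *v x) $ i\<bar> \<le> norm (A $ i) * norm x" for i
    by (simp add: matrix_mult_dot Cauchy_Schwarz_ineq2)
  hence "\<bar>(A *v x) $ i\<bar>\<^sup>2 \<le> (norm (A $ i) * norm x)\<^sup>2" for i
    by (intro power_mono) auto
  hence "(norm (A *v x))\<^sup>2 \<le> (\<Sum>i\<in>UNIV. (norm (A $ i))\<^sup>2) * (norm x)\<^sup>2"
    unfolding power2_norm_eq_inner[of "A *v x"] inner_vec_def sum_distrib_right
    by (intro sum_mono) (simp add: power_mult_distrib flip: power2_eq_square)
  also have "\<dots> = (norm A * norm x)\<^sup>2"
    by (simp add: power_mult_distrib power2_norm_eq_inner inner_vec_def)
  finally show ?thesis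
    by (rule power2_le_imp_le) simp
qed

lemma norm_matrix_vector_mult_le_mult:
  fixes A :: "real^'n^'m"
  assumes "norm A \<le> K" and "norm y \<le> e"
  shows "norm (A *v y) \<le> K * e"
  using order_trans[OF norm_matrix_vector_mult_le mult_mono[OF assms]] order_trans[OF norm_ge_zero assms(1)]
  by simp

lemma inner_matrix_vector_mult_eq_transpose:
  fixes A :: "real^'n^'m"
  shows "x \<bullet> (A *v y) = (transpose A *v x) \<bullet> y"
  by (simp add: dot_lmul_matrix)

lemma quadratic_form_matrix_vector_mult:
  fixes A M :: "real^'n^'n"
  shows "(A *v y) \<bullet> (M *v (A *v y)) = y \<bullet> ((transpose A ** M ** A) *v y)"
proof -
  have "(A *v y) \<bullet> (M *v (A *v y)) = (transpose A *v (M *v (A *v y))) \<bullet> y"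
    by (metis inner_commute inner_matrix_vector_mult_eq_transpose)
  also have "\<dots> = y \<bullet> ((transpose A ** M ** A) *v y)"
    by (simp only: matrix_vector_mul_assoc matrix_mul_assoc inner_commute)
  finally show ?thesis .
qed

lemma taylor_lagrange_second_order:
  fixes f :: "real^'n \<Rightarrow> real" and Df :: "real^'n \<Rightarrow> real^'n" and D2f :: "real^'n \<Rightarrow> real^'n^'n"
  assumes deriv: "\<And>r. r \<in> {0..1} \<Longrightarrow>
      (f has_derivative (\<lambda>k. Df (z + r *\<^sub>R h) \<bullet> k)) (at (z + r *\<^sub>R h)) \<and>
      (Df has_derivative (\<lambda>k. D2f (z + r *\<^sub>R h) *v k)) (at (z + r *\<^sub>R h))"
  obtains \<xi> where "0 < \<xi>" "\<xi> < 1"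
    and "f (z + h) = f z + Df z \<bullet> h + h \<bullet> (D2f (z + \<xi> *\<^sub>R h) *v h) / 2"
proof -
  define d :: "nat \<Rightarrow> real \<Rightarrow> real" where
    "d = (\<lambda>m r. if m = 0 then f (z + r *\<^sub>R h) else if m = 1 then Df (z + r *\<^sub>R h) \<bullet> h
               else h \<bullet> (D2f (z + r *\<^sub>R h) *v h))"
  have line: "((\<lambda>r::real. z + r *\<^sub>R h) has_derivative (\<lambda>r'. r' *\<^sub>R h)) (at r)" for r
    by (auto intro!: derivative_eq_intros)
  have "DERIV (d m) r :> d (Suc m) r" if "m < 2" "0 \<le> r" "r \<le> 1" for m r
  proof -
    have f': "(f has_derivative (\<lambda>k. Df (z + r *\<^sub>R h) \<bullet> k)) (at (z + r *\<^sub>R h))"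
      and Df': "(Df has_derivative (\<lambda>k. D2f (z + r *\<^sub>R h) *v k)) (at (z + r *\<^sub>R h))"
      using deriv[of r] that by auto
    consider "m = 0" | "m = 1" using \<open>m < 2\<close> by linarith
    thus ?thesis
    proof cases
      case 1
      have "((\<lambda>r. f (z + r *\<^sub>R h)) has_real_derivative Df (z + r *\<^sub>R h) \<bullet> h) (at r)"
        by (rule has_derivative_imp_has_field_derivative[OF has_derivative_compose[OF line f']]) simp
      thus ?thesis
        unfolding 1 d_def by simp
    next
      case 2
      have "((\<lambda>r. Df (z + r *\<^sub>R h) \<bullet> h) has_real_derivative h \<bullet> (D2f (z + r *\<^sub>R h) *v h)) (at r)"
        by (rule has_derivative_imp_has_field_derivative[OF bounded_linear.has_derivative[OF
              bounded_linear_inner_left has_derivative_compose[OF line Df']]])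
           (simp add: matrix_vector_mult_scaleR inner_commute)
      thus ?thesis
        unfolding 2 d_def by simp
    qed
  qed
  then obtain \<xi> where "0 < \<xi>" "\<xi> < 1"
    and "d 0 1 = (\<Sum>m<2. d m 0 / fact m * (1 - 0) ^ m) + d 2 \<xi> / fact 2 * (1 - 0) ^ 2"
    using Taylor[of 2 d "d 0" 0 1 0 1] by auto
  with that show ?thesis
    by (simp add: d_def numeral_2_eq_2)
qed

lemma taylor_second_order_bound:
  fixes f :: "real^'n \<Rightarrow> real" and Df :: "real^'n \<Rightarrow> real^'n" and D2f :: "real^'n \<Rightarrow> real^'n^'n"
  assumes deriv: "\<And>r. r \<in> {0..1} \<Longrightarrow>
      (f has_derivative (\<lambda>k. Df (z + r *\<^sub>R h) \<bullet> k)) (at (z + r *\<^sub>R h)) \<and>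
      (Df has_derivative (\<lambda>k. D2f (z + r *\<^sub>R h) *v k)) (at (z + r *\<^sub>R h))"
    and close: "\<And>r. r \<in> {0..1} \<Longrightarrow> norm (D2f (z + r *\<^sub>R h) - M) \<le> \<omega>"
  shows "\<bar>f (z + h) - (f z + Df z \<bullet> h + h \<bullet> (M *v h) / 2)\<bar> \<le> \<omega> * (norm h)\<^sup>2 / 2"
proof -
  obtain \<xi> where \<xi>: "0 < \<xi>" "\<xi> < 1"
    and eq: "f (z + h) = f z + Df z \<bullet> h + h \<bullet> (D2f (z + \<xi> *\<^sub>R h) *v h) / 2"
    using taylor_lagrange_second_order[OF deriv] by blast
  have "\<bar>h \<bullet> (D2f (z + \<xi> *\<^sub>R h) *v h) - h \<bullet> (M *v h)\<bar> = \<bar>h \<bullet> ((D2f (z + \<xi> *\<^sub>R h) - M) *v h)\<bar>"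
    by (simp add: matrix_vector_mult_diff_rdistrib inner_diff_right)
  also have "\<dots> \<le> norm h * (norm (D2f (z + \<xi> *\<^sub>R h) - M) * norm h)"
    by (rule order_trans[OF Cauchy_Schwarz_ineq2 mult_left_mono[OF norm_matrix_vector_mult_le]]) simp
  also have "\<dots> \<le> norm h * (\<omega> * norm h)"
    using close[of \<xi>] \<xi> by (intro mult_left_mono mult_right_mono) auto
  finally show ?thesis
    unfolding eq by (simp add: power2_eq_square field_simps)
qed

section \<open>Expansion of the parabolic mean\<close>

lemma average_approximation_bound:
  fixes f p :: "'a::euclidean_space \<Rightarrow> real"
  assumes "m > 0" and f: "f integrable_on S" and p: "(p has_integral m * X) S"
    and one: "((\<lambda>x. 1) has_integral m) S"
    and close: "\<And>x. x \<in> S \<Longrightarrow> \<bar>f x - p x\<bar> \<le> \<eta>"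
  shows "\<bar>(1 / m) * integral S f - X\<bar> \<le> \<eta>"
proof -
  have "\<bar>integral S f - m * X\<bar> \<le> \<eta> * m"
    by (rule integral_approximation_bound[OF f p one close])
  moreover have "(1 / m) * integral S f - X = (integral S f - m * X) / m"
    using \<open>m > 0\<close> by (simp add: field_simps)
  ultimately show ?thesis
    using \<open>m > 0\<close> by (simp add: abs_divide pos_divide_le_eq)
qed

lemma ball_average_quadratic_approx:
  fixes f :: "real^'n \<Rightarrow> real"
  assumes "\<epsilon> > 0" and f: "f integrable_on ball 0 \<epsilon>"
    and close: "\<And>y. y \<in> ball 0 \<epsilon> \<Longrightarrow> \<bar>f y - (c + w \<bullet> y + y \<bullet> (P *v y) / 2)\<bar> \<le> \<eta>"
  shows "\<bar>(1 / measure lborel (ball (0::real^'n) \<epsilon>)) * integral (ball 0 \<epsilon>) f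
           - (c + \<epsilon>\<^sup>2 / (2 * (real CARD('n) + 2)) * trace P)\<bar> \<le> \<eta>"
proof (rule average_approximation_bound[OF _ f _ has_integral_one_ball close])
  define \<beta> where "\<beta> = measure lborel (ball (0::real^'n) \<epsilon>)"
  show "\<beta> > 0"
    unfolding \<beta>_def using \<open>\<epsilon> > 0\<close> by simp
  have "((\<lambda>y. c + w \<bullet> y + y \<bullet> (P *v y) / 2) has_integral
      c * \<beta> + 0 + \<epsilon>\<^sup>2 / (real CARD('n) + 2) * \<beta> * trace P / 2) (ball 0 \<epsilon>)"
    unfolding \<beta>_def
    using has_integral_mult_right[OF has_integral_one_ball[of 0 \<epsilon>], of c]
    by (intro has_integral_add has_integral_ball_linear_form
        has_integral_divide[OF has_integral_ball_quadratic_form[OF \<open>\<epsilon> > 0\<close>]]) simp_all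
  thus "((\<lambda>y. c + w \<bullet> y + y \<bullet> (P *v y) / 2) has_integral
      \<beta> * (c + \<epsilon>\<^sup>2 / (2 * (real CARD('n) + 2)) * trace P)) (ball 0 \<epsilon>)"
    by (simp add: field_simps)
qed

lemma interval_average_linear_approx:
  fixes g :: "real \<Rightarrow> real"
  assumes "\<tau> > 0" and g: "g integrable_on {t - \<tau>..t}"
    and close: "\<And>s. s \<in> {t - \<tau>..t} \<Longrightarrow> \<bar>g s - (a + d * (s - t))\<bar> \<le> \<eta>"
  shows "\<bar>(1 / \<tau>) * integral {t - \<tau>..t} g - (a - d * \<tau> / 2)\<bar> \<le> \<eta>"
proof (rule average_approximation_bound[OF \<open>\<tau> > 0\<close> g _ _ close])
  define F where "F s = a * s + d * (s - t)\<^sup>2 / 2" for s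
  have "((\<lambda>s. a + d * (s - t)) has_integral F t - F (t - \<tau>)) {t - \<tau>..t}"
  proof (rule fundamental_theorem_of_calculus)
    show "t - \<tau> \<le> t"
      using \<open>\<tau> > 0\<close> by simp
    show "(F has_vector_derivative a + d * (s - t)) (at s within {t - \<tau>..t})" for s
      unfolding F_def by (auto intro!: derivative_eq_intros simp: power2_eq_square field_simps)
  qed
  thus "((\<lambda>s. a + d * (s - t)) has_integral \<tau> * (a - d * \<tau> / 2)) {t - \<tau>..t}"
    unfolding F_def by (simp add: power2_eq_square field_simps)
  show "((\<lambda>s. 1) has_integral \<tau>) {t - \<tau>..t}"
    using has_integral_const_real[of "1::real" "t - \<tau>" t] \<open>\<tau> > 0\<close> by (simp add: real_scaleR_def)
qed

lemma ball_average_second_order: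
  fixes f :: "real^'n \<Rightarrow> real" and Df :: "real^'n \<Rightarrow> real^'n" and D2f :: "real^'n \<Rightarrow> real^'n^'n"
    and A :: "real^'n^'n"
  assumes "\<epsilon> > 0" and A: "norm A \<le> K"
    and deriv: "\<And>z. z \<in> cball x (K * \<epsilon>) \<Longrightarrow>
      (f has_derivative (\<lambda>k. Df z \<bullet> k)) (at z) \<and> (Df has_derivative (\<lambda>k. D2f z *v k)) (at z)"
    and close: "\<And>z. z \<in> cball x (K * \<epsilon>) \<Longrightarrow> norm (D2f z - M) \<le> \<omega>"
  shows "\<bar>(1 / measure lborel (ball (0::real^'n) \<epsilon>)) * integral (ball 0 \<epsilon>) (\<lambda>y. f (x + A *v y))
           - (f x + \<epsilon>\<^sup>2 / (2 * (real CARD('n) + 2)) * trace (transpose A ** M ** A))\<bar>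
         \<le> \<omega> * (K * \<epsilon>)\<^sup>2 / 2"
proof (rule ball_average_quadratic_approx[OF \<open>\<epsilon> > 0\<close>])
  have Ay: "norm (A *v y) \<le> K * \<epsilon>" if "norm y \<le> \<epsilon>" for y
    using norm_matrix_vector_mult_le_mult[OF A that] .
  have segment: "x + r *\<^sub>R (A *v y) \<in> cball x (K * \<epsilon>)" if "norm y \<le> \<epsilon>" "r \<in> {0..1}" for y r
    using Ay[OF that(1)] that(2) mult_left_le_one_le[of "norm (A *v y)" "\<bar>r\<bar>"]
    by (auto simp: dist_norm)
  have "continuous_on (cball x (K * \<epsilon>)) f"
    using deriv by (blast intro: continuous_at_imp_continuous_on has_derivative_continuous)
  hence "continuous_on (cball 0 \<epsilon>) (\<lambda>y. f (x + A *v y))"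
    by (rule continuous_on_compose2) (use segment[where r=1] in \<open>auto intro!: continuous_intros\<close>)
  thus "(\<lambda>y. f (x + A *v y)) integrable_on ball 0 \<epsilon>"
    by (rule integrable_on_ball_if_continuous)
  fix y :: "real^'n" assume "y \<in> ball 0 \<epsilon>"
  hence y: "norm y \<le> \<epsilon>" by simp
  have "\<bar>f (x + A *v y) - (f x + Df x \<bullet> (A *v y) + (A *v y) \<bullet> (M *v (A *v y)) / 2)\<bar>
      \<le> \<omega> * (norm (A *v y))\<^sup>2 / 2"
    using deriv close segment[OF y] by (intro taylor_second_order_bound[where D2f = D2f]) auto
  also have "\<dots> \<le> \<omega> * (K * \<epsilon>)\<^sup>2 / 2"
    using close[of x] Ay[OF y] \<open>\<epsilon> > 0\<close> A
    by (intro divide_right_mono mult_left_mono power_mono) (auto intro: order_trans[OF norm_ge_zero])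
  finally show "\<bar>f (x + A *v y) - (f x + (transpose A *v Df x) \<bullet> y
      + y \<bullet> ((transpose A ** M ** A) *v y) / 2)\<bar> \<le> \<omega> * (K * \<epsilon>)\<^sup>2 / 2"
    by (simp only: quadratic_form_matrix_vector_mult inner_matrix_vector_mult_eq_transpose[of "Df x"])
qed

lemma continuous_on_integral_ball_affine_image:
  fixes f :: "real^'n \<Rightarrow> real \<Rightarrow> real" and A :: "real^'m^'n"
  assumes cont: "continuous_on S (\<lambda>(z, s). f z s)" and A: "norm A \<le> K"
    and sub: "cball x (K * \<epsilon>) \<times> {a..b} \<subseteq> S"
  shows "continuous_on {a..b} (\<lambda>s. integral (ball 0 \<epsilon>) (\<lambda>y. f (x + A *v y) s))"
proof (rule continuous_on_integral_ball_parametric)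
  have "(x + A *v fst p, snd p) \<in> S" if "p \<in> cball 0 \<epsilon> \<times> {a..b}" for p
    using norm_matrix_vector_mult_le_mult[OF A, of "fst p" \<epsilon>] sub that
    by (auto simp: dist_norm mem_Times_iff)
  hence image: "(\<lambda>p. (x + A *v fst p, snd p)) ` (cball 0 \<epsilon> \<times> {a..b}) \<subseteq> S"
    by blast
  have "continuous_on (cball 0 \<epsilon> \<times> {a..b}) (\<lambda>p. (x + A *v fst p, snd p))"
    by (intro continuous_intros bounded_linear.continuous_on[OF matrix_vector_mul_bounded_linear])
  from continuous_on_compose2[OF cont this image]
  show "continuous_on (cball 0 \<epsilon> \<times> {a..b}) (\<lambda>(y, s). f (x + A *v y) s)"
    by (simp add: case_prod_beta')
qed

definition parabolic_mean ::
  "(real^'n \<Rightarrow> real \<Rightarrow> real) \<Rightarrow> real \<Rightarrow> real^'n^'n \<Rightarrow> real \<Rightarrow> real^'n \<Rightarrow> real \<Rightarrow> real" where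
  "parabolic_mean v \<epsilon> A b x t =
     (let \<tau> = b / (real CARD('n) + 2) * \<epsilon>\<^sup>2 in
       (1 / \<tau>) * integral {t - \<tau>..t}
         (\<lambda>s. (1 / measure lborel (ball (0::real^'n) \<epsilon>)) * integral (ball 0 \<epsilon>) (\<lambda>y. v (x + A *v y) s)))"

lemma mean_op_eq_sup_inf_parabolic_mean:
  "mean_op AA \<epsilon> v x t = (SUP \<A>\<in>AA x t. INF p\<in>\<A>. parabolic_mean v \<epsilon> (fst p) (snd p) x t)"
  unfolding mean_op_def parabolic_mean_def Let_def ..

lemma parabolic_mean_linear_approx:
  fixes v :: "real^'n \<Rightarrow> real \<Rightarrow> real" and A :: "real^'n^'n" and b \<epsilon> :: real
  defines "\<tau> \<equiv> b / (real CARD('n) + 2) * \<epsilon>\<^sup>2"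
  assumes "0 < b" and "0 < \<epsilon>"
    and cont: "continuous_on {t - \<tau>..t} (\<lambda>s. integral (ball 0 \<epsilon>) (\<lambda>y. v (x + A *v y) s))"
    and close: "\<And>s. s \<in> {t - \<tau>..t} \<Longrightarrow> \<bar>(1 / measure lborel (ball (0::real^'n) \<epsilon>)) *
      integral (ball 0 \<epsilon>) (\<lambda>y. v (x + A *v y) s) - (c + d * (s - t))\<bar> \<le> \<eta>"
  shows "\<bar>parabolic_mean v \<epsilon> A b x t - (c - \<epsilon>\<^sup>2 / (2 * (real CARD('n) + 2)) * b * d)\<bar> \<le> \<eta>"
proof -
  have "\<tau> > 0"
    unfolding \<tau>_def using \<open>0 < b\<close> \<open>0 < \<epsilon>\<close> by simp
  have "(\<lambda>s. (1 / measure lborel (ball (0::real^'n) \<epsilon>)) * integral (ball 0 \<epsilon>) (\<lambda>y. v (x + A *v y) s))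
      integrable_on {t - \<tau>..t}"
    using cont by (intro integrable_continuous_real continuous_intros)
  from interval_average_linear_approx[OF \<open>\<tau> > 0\<close> this close]
  show ?thesis
    unfolding parabolic_mean_def Let_def \<tau>_def by (simp add: field_simps)
qed

lemma parabolic_mean_estimate:
  fixes phi phit :: "real^'n \<Rightarrow> real \<Rightarrow> real" and Dphi :: "real^'n \<Rightarrow> real \<Rightarrow> real^'n"
    and D2phi :: "real^'n \<Rightarrow> real \<Rightarrow> real^'n^'n" and A :: "real^'n^'n"
    and x :: "real^'n" and t K \<epsilon> :: real
  defines "W \<equiv> cball x (K * \<epsilon>) \<times> {t - K * \<epsilon>\<^sup>2..t}"
  assumes "\<epsilon> > 0" and A: "norm A \<le> K" and b: "0 < b" "b \<le> K"
    and C21: "C21_on S phi phit Dphi D2phi" and "W \<subseteq> S"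
    and hess: "\<And>z s. (z, s) \<in> W \<Longrightarrow> norm (D2phi z s - D2phi x t) \<le> \<omega>"
    and time: "\<And>s. s \<in> {t - K * \<epsilon>\<^sup>2..t} \<Longrightarrow>
      \<bar>phi x s - (phi x t + phit x t * (s - t))\<bar> \<le> \<theta> * \<bar>s - t\<bar>"
    and "\<theta> \<ge> 0"
  shows "\<bar>parabolic_mean phi \<epsilon> A b x t - (phi x t + \<epsilon>\<^sup>2 / (2 * (real CARD('n) + 2)) *
           (trace (transpose A ** D2phi x t ** A) - b * phit x t))\<bar>
         \<le> (\<omega> * K\<^sup>2 / 2 + \<theta> * K) * \<epsilon>\<^sup>2"
proof -
  define n where "n = real CARD('n)"
  define \<tau> where "\<tau> = b / (n + 2) * \<epsilon>\<^sup>2"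
  define q where "q = \<epsilon>\<^sup>2 / (2 * (n + 2)) * trace (transpose A ** D2phi x t ** A)"
  define g where "g s = (1 / measure lborel (ball (0::real^'n) \<epsilon>)) *
    integral (ball 0 \<epsilon>) (\<lambda>y. phi (x + A *v y) s)" for s
  have "K * 1 \<le> K * (n + 2)"
    using b unfolding n_def by (intro mult_left_mono) auto
  hence "b \<le> K * (n + 2)"
    using b by linarith
  hence "b / (n + 2) \<le> K"
    by (simp add: n_def pos_divide_le_eq)
  hence "\<tau> \<le> K * \<epsilon>\<^sup>2"
    unfolding \<tau>_def by (intro mult_right_mono) auto
  hence window: "s \<in> {t - K * \<epsilon>\<^sup>2..t}" "\<bar>s - t\<bar> \<le> K * \<epsilon>\<^sup>2" if "s \<in> {t - \<tau>..t}" for s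
    using that by auto
  have space: "\<bar>g s - (phi x s + q)\<bar> \<le> \<omega> * (K * \<epsilon>)\<^sup>2 / 2" if s: "s \<in> {t - \<tau>..t}" for s
    unfolding g_def q_def n_def
  proof (rule ball_average_second_order[OF \<open>\<epsilon> > 0\<close> A])
    fix z assume "z \<in> cball x (K * \<epsilon>)"
    hence "(z, s) \<in> W"
      unfolding W_def using window(1)[OF s] by simp
    thus "((\<lambda>z. phi z s) has_derivative (\<lambda>k. Dphi z s \<bullet> k)) (at z) \<and>
        ((\<lambda>z. Dphi z s) has_derivative (\<lambda>k. D2phi z s *v k)) (at z)"
      using C21 \<open>W \<subseteq> S\<close> unfolding C21_on_def by blast
    show "norm (D2phi z s - D2phi x t) \<le> \<omega>"
      using hess[OF \<open>(z, s) \<in> W\<close>] .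
  qed
  have close: "\<bar>g s - (phi x t + q + phit x t * (s - t))\<bar>
      \<le> \<omega> * (K * \<epsilon>)\<^sup>2 / 2 + \<theta> * (K * \<epsilon>\<^sup>2)" if "s \<in> {t - \<tau>..t}" for s
  proof -
    have "\<bar>phi x s - (phi x t + phit x t * (s - t))\<bar> \<le> \<theta> * (K * \<epsilon>\<^sup>2)"
      using time[OF window(1)[OF that]] mult_left_mono[OF window(2)[OF that] \<open>\<theta> \<ge> 0\<close>]
      by linarith
    with space[OF that] show ?thesis
      by arith
  qed
  have "continuous_on S (\<lambda>(z, s). phi z s)"
    using C21 unfolding C21_on_def by blast
  moreover have "cball x (K * \<epsilon>) \<times> {t - \<tau>..t} \<subseteq> S"
    using \<open>W \<subseteq> S\<close> window(1) unfolding W_def by auto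
  ultimately have "continuous_on {t - \<tau>..t} (\<lambda>s. integral (ball 0 \<epsilon>) (\<lambda>y. phi (x + A *v y) s))"
    by (rule continuous_on_integral_ball_affine_image[OF _ A])
  from parabolic_mean_linear_approx[OF b(1) \<open>\<epsilon> > 0\<close> this[unfolded \<tau>_def n_def] close[unfolded g_def \<tau>_def n_def]]
  have "\<bar>parabolic_mean phi \<epsilon> A b x t - (phi x t + q - \<epsilon>\<^sup>2 / (2 * (n + 2)) * b * phit x t)\<bar>
      \<le> \<omega> * (K * \<epsilon>)\<^sup>2 / 2 + \<theta> * (K * \<epsilon>\<^sup>2)"
    unfolding n_def .
  moreover have "phi x t + q - \<epsilon>\<^sup>2 / (2 * (n + 2)) * b * phit x t = phi x t + \<epsilon>\<^sup>2 / (2 * (n + 2)) *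
      (trace (transpose A ** D2phi x t ** A) - b * phit x t)"
    unfolding q_def by (simp only: right_diff_distrib mult.assoc add_diff_eq)
  ultimately show ?thesis
    unfolding n_def by (simp add: algebra_simps power_mult_distrib)
qed

lemma C21_on_local_estimates:
  fixes phi phit :: "real^'n \<Rightarrow> real \<Rightarrow> real" and Dphi :: "real^'n \<Rightarrow> real \<Rightarrow> real^'n"
    and D2phi :: "real^'n \<Rightarrow> real \<Rightarrow> real^'n^'n"
  assumes "open S" and "(x, t) \<in> S" and C21: "C21_on S phi phit Dphi D2phi"
    and "\<omega> > 0" and "\<theta> > 0"
  obtains \<rho> where "\<rho> > 0" and "ball (x, t) \<rho> \<subseteq> S"
    and "\<And>z s. dist (z, s) (x, t) < \<rho> \<Longrightarrow> norm (D2phi z s - D2phi x t) \<le> \<omega>"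
    and "\<And>s. \<bar>s - t\<bar> < \<rho> \<Longrightarrow> \<bar>phi x s - (phi x t + phit x t * (s - t))\<bar> \<le> \<theta> * \<bar>s - t\<bar>"
proof -
  obtain \<rho>0 where "\<rho>0 > 0" and \<rho>0: "ball (x, t) \<rho>0 \<subseteq> S"
    using \<open>open S\<close> \<open>(x, t) \<in> S\<close> open_contains_ball by blast
  have "continuous_on S (\<lambda>(z, s). D2phi z s)"
    using C21 unfolding C21_on_def by blast
  then obtain \<rho>1 where "\<rho>1 > 0"
    and \<rho>1: "\<And>z s. (z, s) \<in> S \<Longrightarrow> dist (z, s) (x, t) < \<rho>1 \<Longrightarrow> dist (D2phi z s) (D2phi x t) < \<omega>"
    using \<open>(x, t) \<in> S\<close> \<open>\<omega> > 0\<close> unfolding continuous_on_iff by fastforce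
  have "((\<lambda>s. phi x s) has_derivative (*) (phit x t)) (at t)"
    using C21 \<open>(x, t) \<in> S\<close> unfolding C21_on_def has_field_derivative_def by blast
  then obtain \<rho>2 where "\<rho>2 > 0"
    and \<rho>2: "\<And>s. norm (s - t) < \<rho>2 \<Longrightarrow>
      norm (phi x s - phi x t - phit x t * (s - t)) \<le> \<theta> * norm (s - t)"
    using \<open>\<theta> > 0\<close> unfolding has_derivative_at_alt by blast
  show ?thesis
  proof
    show "min \<rho>0 (min \<rho>1 \<rho>2) > 0"
      using \<open>\<rho>0 > 0\<close> \<open>\<rho>1 > 0\<close> \<open>\<rho>2 > 0\<close> by simp
    show "ball (x, t) (min \<rho>0 (min \<rho>1 \<rho>2)) \<subseteq> S"
      using \<rho>0 by auto
    show "norm (D2phi z s - D2phi x t) \<le> \<omega>" if "dist (z, s) (x, t) < min \<rho>0 (min \<rho>1 \<rho>2)" for z s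
    proof -
      have "(z, s) \<in> S" "dist (z, s) (x, t) < \<rho>1"
        using \<rho>0 that by (auto simp: dist_commute)
      from \<rho>1[OF this] show ?thesis
        by (simp add: dist_norm)
    qed
    show "\<bar>phi x s - (phi x t + phit x t * (s - t))\<bar> \<le> \<theta> * \<bar>s - t\<bar>"
      if "\<bar>s - t\<bar> < min \<rho>0 (min \<rho>1 \<rho>2)" for s
      using \<rho>2[of s] that by (simp add: algebra_simps)
  qed
qed

lemma parabolic_mean_expansion:
  fixes phi phit :: "real^'n \<Rightarrow> real \<Rightarrow> real" and Dphi :: "real^'n \<Rightarrow> real \<Rightarrow> real^'n"
    and D2phi :: "real^'n \<Rightarrow> real \<Rightarrow> real^'n^'n"
  assumes "open S" and "(x, t) \<in> S" and C21: "C21_on S phi phit Dphi D2phi"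
    and "K > 0" and "\<delta> > 0"
  obtains \<epsilon>0 where "\<epsilon>0 > 0"
    and "\<And>\<epsilon> (A::real^'n^'n) b. 0 < \<epsilon> \<Longrightarrow> \<epsilon> < \<epsilon>0 \<Longrightarrow> norm A \<le> K \<Longrightarrow> 0 < b \<Longrightarrow> b \<le> K \<Longrightarrow>
      \<bar>parabolic_mean phi \<epsilon> A b x t - (phi x t + \<epsilon>\<^sup>2 / (2 * (real CARD('n) + 2)) *
         (trace (transpose A ** D2phi x t ** A) - b * phit x t))\<bar> \<le> \<delta> * \<epsilon>\<^sup>2"
proof -
  define \<omega> where "\<omega> = \<delta> / K\<^sup>2"
  define \<theta> where "\<theta> = \<delta> / (2 * K)"
  have "\<omega> > 0" "\<theta> > 0"
    unfolding \<omega>_def \<theta>_def using \<open>K > 0\<close> \<open>\<delta> > 0\<close> by auto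
  obtain \<rho> where "\<rho> > 0" and \<rho>: "ball (x, t) \<rho> \<subseteq> S"
    and hess: "\<And>z s. dist (z, s) (x, t) < \<rho> \<Longrightarrow> norm (D2phi z s - D2phi x t) \<le> \<omega>"
    and time: "\<And>s. \<bar>s - t\<bar> < \<rho> \<Longrightarrow> \<bar>phi x s - (phi x t + phit x t * (s - t))\<bar> \<le> \<theta> * \<bar>s - t\<bar>"
    using C21_on_local_estimates[OF \<open>open S\<close> \<open>(x, t) \<in> S\<close> C21 \<open>\<omega> > 0\<close> \<open>\<theta> > 0\<close>] by blast
  show ?thesis
  proof
    show "min 1 (\<rho> / (2 * K)) > 0"
      using \<open>\<rho> > 0\<close> \<open>K > 0\<close> by simp
    fix \<epsilon> and A :: "real^'n^'n" and b
    assume "0 < \<epsilon>" "\<epsilon> < min 1 (\<rho> / (2 * K))" "norm A \<le> K" "0 < b" "b \<le> K"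
    have "2 * K * \<epsilon> < 2 * K * (\<rho> / (2 * K))"
      using \<open>\<epsilon> < min 1 (\<rho> / (2 * K))\<close> \<open>K > 0\<close> by (intro mult_strict_left_mono) auto
    hence "2 * K * \<epsilon> < \<rho>"
      using \<open>K > 0\<close> by simp
    moreover have "K * \<epsilon>\<^sup>2 \<le> K * \<epsilon>"
      using \<open>0 < \<epsilon>\<close> \<open>\<epsilon> < min 1 (\<rho> / (2 * K))\<close> \<open>K > 0\<close>
      by (intro mult_left_mono) (auto simp: power2_eq_square)
    ultimately have "K * \<epsilon> + K * \<epsilon>\<^sup>2 < \<rho>"
      by linarith
    hence near: "dist (z, s) (x, t) < \<rho>" if "(z, s) \<in> cball x (K * \<epsilon>) \<times> {t - K * \<epsilon>\<^sup>2..t}" for z s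
      using that dist_Pair_Pair[of z s x t] sqrt_sum_squares_le_sum_abs[of "dist z x" "dist s t"]
      by (auto simp: dist_commute dist_real_def)
    have "\<bar>parabolic_mean phi \<epsilon> A b x t - (phi x t + \<epsilon>\<^sup>2 / (2 * (real CARD('n) + 2)) *
         (trace (transpose A ** D2phi x t ** A) - b * phit x t))\<bar> \<le> (\<omega> * K\<^sup>2 / 2 + \<theta> * K) * \<epsilon>\<^sup>2"
    proof (rule parabolic_mean_estimate[OF \<open>0 < \<epsilon>\<close> \<open>norm A \<le> K\<close> \<open>0 < b\<close> \<open>b \<le> K\<close> C21])
      show "cball x (K * \<epsilon>) \<times> {t - K * \<epsilon>\<^sup>2..t} \<subseteq> S"
        using near \<rho> by (auto simp: dist_commute)
      show "\<bar>phi x s - (phi x t + phit x t * (s - t))\<bar> \<le> \<theta> * \<bar>s - t\<bar>"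
        if "s \<in> {t - K * \<epsilon>\<^sup>2..t}" for s
      proof (rule time)
        show "\<bar>s - t\<bar> < \<rho>"
          using near[of x s] that \<open>K > 0\<close> \<open>0 < \<epsilon>\<close> by (auto simp: dist_Pair_Pair dist_real_def)
      qed
    qed (use hess near \<open>\<theta> > 0\<close> in auto)
    also have "(\<omega> * K\<^sup>2 / 2 + \<theta> * K) * \<epsilon>\<^sup>2 = \<delta> * \<epsilon>\<^sup>2"
      unfolding \<omega>_def \<theta>_def using \<open>K > 0\<close> by (simp add: field_simps power2_eq_square)
    finally show "\<bar>parabolic_mean phi \<epsilon> A b x t - (phi x t + \<epsilon>\<^sup>2 / (2 * (real CARD('n) + 2)) *
         (trace (transpose A ** D2phi x t ** A) - b * phit x t))\<bar> \<le> \<delta> * \<epsilon>\<^sup>2" .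
  qed
qed

section \<open>Sup-inf of uniformly approximated families\<close>

lemma cINF_affine_approx:
  fixes G h :: "'p \<Rightarrow> real"
  assumes "X \<noteq> {}" and h: "bdd_below (h ` X)" and "k > 0"
    and close: "\<And>p. p \<in> X \<Longrightarrow> \<bar>G p - (a + k * h p)\<bar> \<le> \<eta>"
  shows "\<bar>(INF p\<in>X. G p) - (a + k * (INF p\<in>X. h p))\<bar> \<le> \<eta>"
proof -
  have lower: "a + k * (INF p\<in>X. h p) - \<eta> \<le> G p" if "p \<in> X" for p
  proof -
    have "k * (INF p\<in>X. h p) \<le> k * h p"
      using cINF_lower[OF h that] \<open>k > 0\<close> by (intro mult_left_mono) auto
    thus ?thesis
      using close[OF that] by (simp add: abs_le_iff)
  qed
  have "bdd_below (G ` X)"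
    using lower by (rule bdd_belowI2)
  hence "(INF p\<in>X. G p) - a - \<eta> \<le> k * h p" if "p \<in> X" for p
    using cINF_lower[of G X p] close[OF that] that by (simp add: abs_le_iff)
  hence "((INF p\<in>X. G p) - a - \<eta>) / k \<le> (INF p\<in>X. h p)"
    using \<open>k > 0\<close> by (intro cINF_greatest[OF \<open>X \<noteq> {}\<close>]) (simp add: pos_divide_le_eq mult.commute)
  hence "(INF p\<in>X. G p) \<le> a + k * (INF p\<in>X. h p) + \<eta>"
    using \<open>k > 0\<close> by (simp add: pos_divide_le_eq mult.commute)
  moreover have "a + k * (INF p\<in>X. h p) - \<eta> \<le> (INF p\<in>X. G p)"
    using lower by (intro cINF_greatest[OF \<open>X \<noteq> {}\<close>])
  ultimately show ?thesis
    by (simp add: abs_le_iff)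
qed

lemma cSUP_affine_approx:
  fixes G h :: "'p \<Rightarrow> real"
  assumes "X \<noteq> {}" and h: "bdd_above (h ` X)" and "k > 0"
    and close: "\<And>p. p \<in> X \<Longrightarrow> \<bar>G p - (a + k * h p)\<bar> \<le> \<eta>"
  shows "\<bar>(SUP p\<in>X. G p) - (a + k * (SUP p\<in>X. h p))\<bar> \<le> \<eta>"
proof -
  have upper: "G p \<le> a + k * (SUP p\<in>X. h p) + \<eta>" if "p \<in> X" for p
  proof -
    have "k * h p \<le> k * (SUP p\<in>X. h p)"
      using cSUP_upper[OF that h] \<open>k > 0\<close> by (intro mult_left_mono) auto
    thus ?thesis
      using close[OF that] by (simp add: abs_le_iff)
  qed
  have "bdd_above (G ` X)"
    using upper by (rule bdd_aboveI2)
  hence "k * h p \<le> (SUP p\<in>X. G p) - a + \<eta>" if "p \<in> X" for p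
    using cSUP_upper[of p X G] close[OF that] that by (simp add: abs_le_iff)
  hence "(SUP p\<in>X. h p) \<le> ((SUP p\<in>X. G p) - a + \<eta>) / k"
    using \<open>k > 0\<close> by (intro cSUP_least[OF \<open>X \<noteq> {}\<close>]) (simp add: pos_le_divide_eq mult.commute)
  hence "a + k * (SUP p\<in>X. h p) - \<eta> \<le> (SUP p\<in>X. G p)"
    using \<open>k > 0\<close> by (simp add: pos_le_divide_eq mult.commute)
  moreover have "(SUP p\<in>X. G p) \<le> a + k * (SUP p\<in>X. h p) + \<eta>"
    using upper by (intro cSUP_least[OF \<open>X \<noteq> {}\<close>])
  ultimately show ?thesis
    by (simp add: abs_le_iff)
qed

lemma sup_inf_affine_approx:
  fixes G h :: "'p \<Rightarrow> real" and AA :: "'p set set"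
  assumes "AA \<noteq> {}" and ne: "\<And>\<A>. \<A> \<in> AA \<Longrightarrow> \<A> \<noteq> {}"
    and bound: "\<And>p. p \<in> \<Union>AA \<Longrightarrow> \<bar>h p\<bar> \<le> B" and "k > 0"
    and close: "\<And>p. p \<in> \<Union>AA \<Longrightarrow> \<bar>G p - (a + k * h p)\<bar> \<le> \<eta>"
  shows "\<bar>(SUP \<A>\<in>AA. INF p\<in>\<A>. G p) - (a + k * (SUP \<A>\<in>AA. INF p\<in>\<A>. h p))\<bar> \<le> \<eta>"
proof (rule cSUP_affine_approx[OF \<open>AA \<noteq> {}\<close> _ \<open>k > 0\<close>])
  have below: "bdd_below (h ` \<A>)" if "\<A> \<in> AA" for \<A>
    using bound that by (intro bdd_belowI2[where m = "- B"]) (force simp: abs_le_iff)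
  have "(INF p\<in>\<A>. h p) \<le> B" if \<A>: "\<A> \<in> AA" for \<A>
  proof -
    obtain p where "p \<in> \<A>"
      using ne[OF \<A>] by blast
    thus ?thesis
      using cINF_lower[OF below[OF \<A>]] bound[of p] \<A> by (force simp: abs_le_iff)
  qed
  thus "bdd_above ((\<lambda>\<A>. INF p\<in>\<A>. h p) ` AA)"
    by (rule bdd_aboveI2)
  show "\<bar>(INF p\<in>\<A>. G p) - (a + k * (INF p\<in>\<A>. h p))\<bar> \<le> \<eta>" if "\<A> \<in> AA" for \<A>
    using that by (intro cINF_affine_approx[OF ne below \<open>k > 0\<close>] close) auto
qed

lemma tendsto_max_zero_divide_iff:
  fixes y :: "real \<Rightarrow> real"
  assumes lim: "((\<lambda>\<epsilon>. y \<epsilon> / \<epsilon>\<^sup>2) \<longlongrightarrow> L) (at_right 0)"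
  shows "((\<lambda>\<epsilon>. max 0 (y \<epsilon>) / \<epsilon>\<^sup>2) \<longlongrightarrow> 0) (at_right 0) \<longleftrightarrow> L \<le> 0"
proof -
  have "max 0 (y \<epsilon>) / \<epsilon>\<^sup>2 = max 0 (y \<epsilon> / \<epsilon>\<^sup>2)" for \<epsilon>
    by (cases "\<epsilon> = 0") (simp_all add: max_divide_distrib_right)
  moreover have "((\<lambda>\<epsilon>. max 0 (y \<epsilon> / \<epsilon>\<^sup>2)) \<longlongrightarrow> max 0 L) (at_right 0)"
    by (intro tendsto_max tendsto_const lim)
  ultimately have "((\<lambda>\<epsilon>. max 0 (y \<epsilon>) / \<epsilon>\<^sup>2) \<longlongrightarrow> max 0 L) (at_right 0)"
    by simp
  thus ?thesis
    using tendsto_unique[OF trivial_limit_at_right_real] by (metis max.absorb1 max.orderI)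
qed

section \<open>Asymptotics of the mean value operator\<close>

lemma trace_form_bounded:
  fixes P :: "((real^'n^'n) \<times> real) set"
  assumes "bounded P"
  obtains B where "\<And>p. p \<in> P \<Longrightarrow> \<bar>trace (transpose (fst p) ** M ** fst p) - snd p * z\<bar> \<le> B"
proof -
  define h where "h p = trace (transpose (fst p) ** M ** fst p) - snd p * z"
    for p :: "(real^'n^'n) \<times> real"
  have "continuous_on UNIV h"
    unfolding h_def trace_def matrix_matrix_mult_def transpose_def by (intro continuous_intros)
  hence "compact (h ` closure P)"
    using \<open>bounded P\<close> by (metis compact_closure compact_continuous_image continuous_on_subset subset_UNIV)
  hence "bounded (h ` closure P)"
    by (rule compact_imp_bounded)
  then obtain B where B: "\<And>v. v \<in> h ` closure P \<Longrightarrow> norm v \<le> B"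
    unfolding bounded_iff by blast
  have "\<bar>h p\<bar> \<le> B" if "p \<in> P" for p
    using B[of "h p"] closure_subset that by auto
  thus ?thesis
    using that unfolding h_def by blast
qed

lemma mean_op_uniform_approx:
  fixes AA :: "real^'n \<Rightarrow> real \<Rightarrow> ((real^'n^'n) \<times> real) set set"
    and phi phit :: "real^'n \<Rightarrow> real \<Rightarrow> real" and Dphi :: "real^'n \<Rightarrow> real \<Rightarrow> real^'n"
    and D2phi :: "real^'n \<Rightarrow> real \<Rightarrow> real^'n^'n"
  assumes "open S" and "(x, t) \<in> S" and C21: "C21_on S phi phit Dphi D2phi"
    and "AA x t \<noteq> {}" and ne: "\<And>\<A>. \<A> \<in> AA x t \<Longrightarrow> \<A> \<noteq> {}"
    and pos: "\<And>\<A> A b. \<A> \<in> AA x t \<Longrightarrow> (A, b) \<in> \<A> \<Longrightarrow> 0 < b"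
    and "bounded (\<Union> (AA x t))" and "\<delta> > 0"
  shows "\<forall>\<^sub>F \<epsilon> in at_right 0. \<bar>mean_op AA \<epsilon> phi x t - (phi x t + \<epsilon>\<^sup>2 / (2 * (real CARD('n) + 2)) *
           F_op AA x t (phit x t) (D2phi x t))\<bar> \<le> \<delta> * \<epsilon>\<^sup>2"
proof -
  define h where "h p = trace (transpose (fst p) ** D2phi x t ** fst p) - snd p * phit x t"
    for p :: "(real^'n^'n) \<times> real"
  obtain K0 where K0: "\<And>p. p \<in> \<Union> (AA x t) \<Longrightarrow> norm p \<le> K0"
    using \<open>bounded (\<Union> (AA x t))\<close> unfolding bounded_iff by blast
  define K where "K = max K0 1"
  have "K > 0"
    unfolding K_def by simp
  have K: "norm (fst p) \<le> K \<and> 0 < snd p \<and> snd p \<le> K" if "p \<in> \<Union> (AA x t)" for p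
  proof -
    obtain A b where p: "p = (A, b)"
      by (cases p)
    have "norm A \<le> norm (A, b)" "norm b \<le> norm (A, b)"
      by (rule norm_fst_le norm_snd_le)+
    moreover have "norm (A, b) \<le> K"
      using K0[OF that] max.cobounded1[of K0 1] unfolding p K_def by linarith
    moreover have "0 < b"
      using pos that unfolding p by blast
    ultimately show ?thesis
      unfolding p fst_conv snd_conv real_norm_def by arith
  qed
  obtain B where B: "\<And>p. p \<in> \<Union> (AA x t) \<Longrightarrow> \<bar>h p\<bar> \<le> B"
    using trace_form_bounded[OF \<open>bounded (\<Union> (AA x t))\<close>] unfolding h_def by blast
  obtain \<epsilon>0 where "\<epsilon>0 > 0" and expansion: "\<And>\<epsilon> (A::real^'n^'n) b.
      0 < \<epsilon> \<Longrightarrow> \<epsilon> < \<epsilon>0 \<Longrightarrow> norm A \<le> K \<Longrightarrow> 0 < b \<Longrightarrow> b \<le> K \<Longrightarrow>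
      \<bar>parabolic_mean phi \<epsilon> A b x t - (phi x t + \<epsilon>\<^sup>2 / (2 * (real CARD('n) + 2)) *
         (trace (transpose A ** D2phi x t ** A) - b * phit x t))\<bar> \<le> \<delta> * \<epsilon>\<^sup>2"
    using parabolic_mean_expansion[OF \<open>open S\<close> \<open>(x, t) \<in> S\<close> C21 \<open>K > 0\<close> \<open>\<delta> > 0\<close>] by blast
  show ?thesis
    unfolding eventually_at_right[OF \<open>\<epsilon>0 > 0\<close>]
  proof (intro exI[of _ \<epsilon>0] conjI allI impI \<open>\<epsilon>0 > 0\<close>)
    fix \<epsilon> :: real assume "0 < \<epsilon>" "\<epsilon> < \<epsilon>0"
    show "\<bar>mean_op AA \<epsilon> phi x t - (phi x t + \<epsilon>\<^sup>2 / (2 * (real CARD('n) + 2)) *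
        F_op AA x t (phit x t) (D2phi x t))\<bar> \<le> \<delta> * \<epsilon>\<^sup>2"
      unfolding mean_op_eq_sup_inf_parabolic_mean F_op_def h_def[symmetric]
    proof (rule sup_inf_affine_approx[OF \<open>AA x t \<noteq> {}\<close> ne B])
      show "\<epsilon>\<^sup>2 / (2 * (real CARD('n) + 2)) > 0"
        using \<open>0 < \<epsilon>\<close> by simp
      fix p assume "p \<in> \<Union> (AA x t)"
      with K have "norm (fst p) \<le> K" "0 < snd p" "snd p \<le> K"
        by blast+
      from expansion[OF \<open>0 < \<epsilon>\<close> \<open>\<epsilon> < \<epsilon>0\<close> this]
      show "\<bar>parabolic_mean phi \<epsilon> (fst p) (snd p) x t -
          (phi x t + \<epsilon>\<^sup>2 / (2 * (real CARD('n) + 2)) * h p)\<bar> \<le> \<delta> * \<epsilon>\<^sup>2"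
        unfolding h_def .
    qed
  qed
qed

lemma mean_op_asymptotics:
  fixes AA :: "real^'n \<Rightarrow> real \<Rightarrow> ((real^'n^'n) \<times> real) set set"
    and phi phit :: "real^'n \<Rightarrow> real \<Rightarrow> real" and Dphi :: "real^'n \<Rightarrow> real \<Rightarrow> real^'n"
    and D2phi :: "real^'n \<Rightarrow> real \<Rightarrow> real^'n^'n"
  assumes S: "open S" "(x, t) \<in> S" "C21_on S phi phit Dphi D2phi"
    and AA: "AA x t \<noteq> {}" "\<And>\<A>. \<A> \<in> AA x t \<Longrightarrow> \<A> \<noteq> {}"
      "\<And>\<A> A b. \<A> \<in> AA x t \<Longrightarrow> (A, b) \<in> \<A> \<Longrightarrow> 0 < b" "bounded (\<Union> (AA x t))"
  shows "((\<lambda>\<epsilon>. (- phi x t + mean_op AA \<epsilon> phi x t) / \<epsilon>\<^sup>2) \<longlongrightarrow>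
           F_op AA x t (phit x t) (D2phi x t) / (2 * (real CARD('n) + 2))) (at_right 0)"
proof -
  define c where "c = 2 * (real CARD('n) + 2)"
  define F where "F = F_op AA x t (phit x t) (D2phi x t)"
  have "c > 0"
    unfolding c_def by simp
  show ?thesis
    unfolding tendsto_iff F_def[symmetric] c_def[symmetric]
  proof (intro allI impI)
    fix e :: real assume "e > 0"
    have "\<forall>\<^sub>F \<epsilon> in at_right 0. \<bar>mean_op AA \<epsilon> phi x t - (phi x t + \<epsilon>\<^sup>2 / c * F)\<bar> \<le> e / 2 * \<epsilon>\<^sup>2"
      unfolding F_def c_def by (rule mean_op_uniform_approx) (use S AA \<open>e > 0\<close> in auto)
    thus "\<forall>\<^sub>F \<epsilon> in at_right 0. dist ((- phi x t + mean_op AA \<epsilon> phi x t) / \<epsilon>\<^sup>2) (F / c) < e"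
      using eventually_at_right_less[of 0]
    proof eventually_elim
      case (elim \<epsilon>)
      have "dist ((- phi x t + mean_op AA \<epsilon> phi x t) / \<epsilon>\<^sup>2) (F / c)
          = \<bar>mean_op AA \<epsilon> phi x t - (phi x t + \<epsilon>\<^sup>2 / c * F)\<bar> / \<epsilon>\<^sup>2"
        using elim \<open>c > 0\<close> by (simp add: dist_real_def abs_divide field_simps)
      also have "\<dots> \<le> e / 2"
        using elim by (simp only: pos_divide_le_eq zero_less_power2)
      finally show ?case
        using \<open>e > 0\<close> by simp
    qed
  qed
qed

theorem theorem2p9:
  fixes \<Omega> :: "(real^'n) set" and t1 t2 :: real
    and AA :: "real^'n \<Rightarrow> real \<Rightarrow> ((real^'n^'n) \<times> real) set set"
    and u :: "real^'n \<Rightarrow> real \<Rightarrow> real"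
  assumes "open \<Omega>" and "t1 < t2"
    and "\<And>x t. x \<in> \<Omega> \<Longrightarrow> t \<in> {t1<..<t2} \<Longrightarrow> AA x t \<noteq> {}"
    and "\<And>x t \<A>. x \<in> \<Omega> \<Longrightarrow> t \<in> {t1<..<t2} \<Longrightarrow> \<A> \<in> AA x t \<Longrightarrow> \<A> \<noteq> {}"
    and "\<And>x t \<A> A b. x \<in> \<Omega> \<Longrightarrow> t \<in> {t1<..<t2} \<Longrightarrow> \<A> \<in> AA x t \<Longrightarrow> (A, b) \<in> \<A>
           \<Longrightarrow> psd_matrix A \<and> 0 < b"
    and "\<And>x t. x \<in> \<Omega> \<Longrightarrow> t \<in> {t1<..<t2} \<Longrightarrow> bounded (\<Union> (AA x t))"
    and "continuous_on (\<Omega> \<times> {t1<..<t2}) (\<lambda>(x,t). u x t)"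
  shows "viscosity_solution \<Omega> t1 t2 (F_op AA) u \<longleftrightarrow> asymp_viscosity \<Omega> t1 t2 AA u"
proof -
  have sign_iff:
    "((\<lambda>\<epsilon>. max 0 (- phi x t + mean_op AA \<epsilon> phi x t) / \<epsilon>\<^sup>2) \<longlongrightarrow> 0) (at_right 0)
       \<longleftrightarrow> F_op AA x t (phit x t) (D2phi x t) \<le> 0"
    "((\<lambda>\<epsilon>. max 0 (- (- phi x t + mean_op AA \<epsilon> phi x t)) / \<epsilon>\<^sup>2) \<longlongrightarrow> 0) (at_right 0)
       \<longleftrightarrow> F_op AA x t (phit x t) (D2phi x t) \<ge> 0"
    if "x \<in> \<Omega>" "t \<in> {t1<..<t2}" "C21_on (\<Omega> \<times> {t1<..<t2}) phi phit Dphi D2phi"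
    for x t phi phit Dphi D2phi
  proof -
    have lim: "((\<lambda>\<epsilon>. (- phi x t + mean_op AA \<epsilon> phi x t) / \<epsilon>\<^sup>2) \<longlongrightarrow>
        F_op AA x t (phit x t) (D2phi x t) / (2 * (real CARD('n) + 2))) (at_right 0)"
      using assms(1,3-6) that by (intro mean_op_asymptotics) (auto intro: open_Times)
    show "((\<lambda>\<epsilon>. max 0 (- phi x t + mean_op AA \<epsilon> phi x t) / \<epsilon>\<^sup>2) \<longlongrightarrow> 0) (at_right 0)
       \<longleftrightarrow> F_op AA x t (phit x t) (D2phi x t) \<le> 0"
      using tendsto_max_zero_divide_iff[OF lim] by (simp add: divide_le_0_iff)
    show "((\<lambda>\<epsilon>. max 0 (- (- phi x t + mean_op AA \<epsilon> phi x t)) / \<epsilon>\<^sup>2) \<longlongrightarrow> 0) (at_right 0)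
       \<longleftrightarrow> F_op AA x t (phit x t) (D2phi x t) \<ge> 0"
      using tendsto_max_zero_divide_iff[OF tendsto_minus[OF lim, unfolded minus_divide_left]]
      by (simp add: zero_le_divide_iff)
  qed
  show ?thesis
    unfolding viscosity_solution_def asymp_viscosity_def using assms(7) sign_iff by blast
qed

end
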